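(* Suppose Assumptions A and C hold, and suppose that for every semidefinite face $\mathcal F$ of $\Gamma$, $$\dim(\mathcal V(\mathcal F))\ \ge\ \operatorname{affdim}(\{b(\gamma):\gamma\in\mathcal F\})+1.$$ Then $\operatorname{conv}(\mathcal D)=\mathcal D_{\mathrm{SDP}}$ and $\mathrm{Opt}=\mathrm{Opt}_{\mathrm{SDP}}$.
   Context: Fix integers $N\ge 1$, $m_I,m_E\ge 0$, $m:=m_I+m_E\ge 1$; $[a,b]=\{a,\dots,b\}$, $[n]=[1,n]$. For $i\in[0,m]$ let $q_i(x)=x^\top A_ix+2b_i^\top x+c_i$ with $A_i\in\mathbb S^N$, $b_i\in\mathbb R^N$, $c_i\in\mathbb R$. $\mathrm{Opt}:=\inf\{q_0(x): q_i(x)\le 0\ \forall i\in[m_I],\ q_i(x)=0\ \forall i\in[m_I+1,m]\}$; $\mathcal D:=\{(x,t)\in\mathbb R^N\times\mathbb R: q_0(x)\le 2t,\ q_i(x)\le0\ \forall i\in[m_I],\ q_i(x)=0\ \forall i\in[m_I+1,m]\}$. Let $Q_i=\begin{pmatrix}c_i& b_i^\top\\ b_i& A_i\end{pmatrix}$; $\mathrm{Opt}_{\mathrm{SDP}}:=\inf\{\langle Q_0,Y\rangle: Y=\begin{pmatrix}1&x^\top\\ x& X\end{pmatrix}\succeq 0,\ X\in\mathbb S^N,\ \langle Q_i,Y\rangle\le 0\ \forall i\in[m_I],\ \langle Q_i,Y\rangle=0\ \forall i\in[m_I+1,m]\}$ and $\mathcal D_{\mathrm{SDP}}:=\{(x,t):\exists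 X\in\mathbb S^N$ with $Y=\begin{pmatrix}1&x^\top\\ x& X\end{pmatrix}\succeq0$, $\langle Q_0,Y\rangle\le 2t$, and the same constraints$\}$. For $\gamma\in\mathbb R^m$: $A(\gamma)=A_0+\sum\gamma_iA_i$, $b(\gamma)=b_0+\sum\gamma_ib_i$; $\Gamma:=\{\gamma\in\mathbb R^m: A(\gamma)\succeq0,\ \gamma_i\ge0\ \forall i\in[m_I]\}$. Assumption A: the QCQP feasible set is nonempty and some $\gamma^*$ with $\gamma^*_i\ge0$ ($i\in[m_I]$) has $A(\gamma^* )\succ0$. Assumption C: $\Gamma$ is a polyhedron. A nonempty face $\mathcal F$ of $\Gamma$ is definite if some $\gamma\in\mathcal F$ has $A(\gamma)\succ0$, semidefinite otherwise; $\mathcal V(\mathcal F):=\{v\in\mathbb R^N: A(\gamma)v=0\ \forall \gamma\in\mathcal F\}$. $\operatorname{affdim}$ is the dimension of the affine hull. *)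

theory Defs
  imports "HOL-Analysis.Analysis"
begin

definition symm :: "real^'k^'k \<Rightarrow> bool" where
  "symm M \<longleftrightarrow> transpose M = M"

definition psd :: "real^'k^'k \<Rightarrow> bool" where
  "psd M \<longleftrightarrow> symm M \<and> (\<forall>z. 0 \<le> z \<bullet> (M *v z))"

definition pd :: "real^'k^'k \<Rightarrow> bool" where
  "pd M \<longleftrightarrow> symm M \<and> (\<forall>z. z \<noteq> 0 \<longrightarrow> 0 < z \<bullet> (M *v z))"

definition frob :: "real^'k^'k \<Rightarrow> real^'k^'k \<Rightarrow> real" where
  "frob M Y = (\<Sum>i\<in>UNIV. \<Sum>j\<in>UNIV. M$i$j * Y$i$j)"

text \<open>Block matrix [[c, b^T],[b, A]] of size (N+1)x(N+1); the extra index is None.\<close>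
definition blk :: "real \<Rightarrow> real^'n \<Rightarrow> real^'n^'n \<Rightarrow> real^('n option)^('n option)" where
  "blk c b A = (\<chi> i j. case i of
      None \<Rightarrow> (case j of None \<Rightarrow> c | Some j' \<Rightarrow> b$j')
    | Some i' \<Rightarrow> (case j of None \<Rightarrow> b$i' | Some j' \<Rightarrow> A$i'$j'))"

definition qf :: "real^'n^'n \<Rightarrow> real^'n \<Rightarrow> real \<Rightarrow> real^'n \<Rightarrow> real" where
  "qf A b c x = x \<bullet> (A *v x) + 2 * (b \<bullet> x) + c"

text \<open>Constraints are indexed by a finite type 'm (so m = CARD('m) >= 1);
  I is the set of inequality constraints, the rest are equality constraints.\<close>
definition qfeas ::
  "('m::finite \<Rightarrow> real^'n^'n) \<Rightarrow> ('m \<Rightarrow> real^'n) \<Rightarrow> ('m \<Rightarrow> real) \<Rightarrow> 'm set \<Rightarrow> real^'n \<Rightarrow> bool" where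
  "qfeas A b c I x \<longleftrightarrow> (\<forall>i\<in>I. qf (A i) (b i) (c i) x \<le> 0) \<and> (\<forall>i. i \<notin> I \<longrightarrow> qf (A i) (b i) (c i) x = 0)"

definition Opt ::
  "real^'n^'n \<Rightarrow> real^'n \<Rightarrow> real \<Rightarrow> ('m::finite \<Rightarrow> real^'n^'n) \<Rightarrow> ('m \<Rightarrow> real^'n) \<Rightarrow> ('m \<Rightarrow> real) \<Rightarrow> 'm set \<Rightarrow> ereal" where
  "Opt A0 b0 c0 A b c I = Inf {ereal (qf A0 b0 c0 x) | x. qfeas A b c I x}"

definition DD ::
  "real^'n^'n \<Rightarrow> real^'n \<Rightarrow> real \<Rightarrow> ('m::finite \<Rightarrow> real^'n^'n) \<Rightarrow> ('m \<Rightarrow> real^'n) \<Rightarrow> ('m \<Rightarrow> real) \<Rightarrow> 'm set \<Rightarrow> ((real^'n) \<times> real) set" where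
  "DD A0 b0 c0 A b c I = {(x, t). qf A0 b0 c0 x \<le> 2 * t \<and> qfeas A b c I x}"

definition sdpfeas ::
  "('m::finite \<Rightarrow> real^'n^'n) \<Rightarrow> ('m \<Rightarrow> real^'n) \<Rightarrow> ('m \<Rightarrow> real) \<Rightarrow> 'm set \<Rightarrow> real^'n \<Rightarrow> real^'n^'n \<Rightarrow> bool" where
  "sdpfeas A b c I x X \<longleftrightarrow> symm X \<and> psd (blk 1 x X) \<and>
     (\<forall>i\<in>I. frob (blk (c i) (b i) (A i)) (blk 1 x X) \<le> 0) \<and>
     (\<forall>i. i \<notin> I \<longrightarrow> frob (blk (c i) (b i) (A i)) (blk 1 x X) = 0)"

definition OptSDP ::
  "real^'n^'n \<Rightarrow> real^'n \<Rightarrow> real \<Rightarrow> ('m::finite \<Rightarrow> real^'n^'n) \<Rightarrow> ('m \<Rightarrow> real^'n) \<Rightarrow> ('m \<Rightarrow> real) \<Rightarrow> 'm set \<Rightarrow> ereal" where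
  "OptSDP A0 b0 c0 A b c I =
     Inf {ereal (frob (blk c0 b0 A0) (blk 1 x X)) | x X. sdpfeas A b c I x X}"

definition DSDP ::
  "real^'n^'n \<Rightarrow> real^'n \<Rightarrow> real \<Rightarrow> ('m::finite \<Rightarrow> real^'n^'n) \<Rightarrow> ('m \<Rightarrow> real^'n) \<Rightarrow> ('m \<Rightarrow> real) \<Rightarrow> 'm set \<Rightarrow> ((real^'n) \<times> real) set" where
  "DSDP A0 b0 c0 A b c I = {(x, t). \<exists>X. sdpfeas A b c I x X \<and> frob (blk c0 b0 A0) (blk 1 x X) \<le> 2 * t}"

definition Agam :: "real^'n^'n \<Rightarrow> ('m::finite \<Rightarrow> real^'n^'n) \<Rightarrow> real^'m \<Rightarrow> real^'n^'n" where
  "Agam A0 A g = A0 + (\<Sum>i\<in>UNIV. g$i *\<^sub>R A i)"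

definition bgam :: "real^'n \<Rightarrow> ('m::finite \<Rightarrow> real^'n) \<Rightarrow> real^'m \<Rightarrow> real^'n" where
  "bgam b0 b g = b0 + (\<Sum>i\<in>UNIV. g$i *\<^sub>R b i)"

definition Gam :: "real^'n^'n \<Rightarrow> ('m::finite \<Rightarrow> real^'n^'n) \<Rightarrow> 'm set \<Rightarrow> (real^'m) set" where
  "Gam A0 A I = {g. psd (Agam A0 A g) \<and> (\<forall>i\<in>I. 0 \<le> g$i)}"

definition semidef_face :: "real^'n^'n \<Rightarrow> ('m::finite \<Rightarrow> real^'n^'n) \<Rightarrow> 'm set \<Rightarrow> (real^'m) set \<Rightarrow> bool" where
  "semidef_face A0 A I F \<longleftrightarrow> F face_of Gam A0 A I \<and> F \<noteq> {} \<and> \<not> (\<exists>g\<in>F. pd (Agam A0 A g))"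

definition VF :: "real^'n^'n \<Rightarrow> ('m::finite \<Rightarrow> real^'n^'n) \<Rightarrow> (real^'m) set \<Rightarrow> (real^'n) set" where
  "VF A0 A F = {v. \<forall>g\<in>F. Agam A0 A g *v v = 0}"

end

theory Submission
  imports Defs
begin

text \<open>
  Let \<open>L(\<gamma>, x) = q\<^sub>0(x) + \<Sum>\<^sub>i \<gamma>\<^sub>i q\<^sub>i(x)\<close> be the Lagrangian. Weak duality (the Frobenius product of
  two positive semidefinite matrices is nonnegative) puts every point \<open>(x, t)\<close> of \<open>D\<^sub>S\<^sub>D\<^sub>P\<close> into
  the set of \<open>(x, t)\<close> with \<open>L(\<gamma>, x) \<le> 2t\<close> for all \<open>\<gamma> \<in> \<Gamma>\<close>. Such a point lies in \<open>conv D\<close>, by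
  induction on the codimension of the face of multipliers active at \<open>(x, t)\<close>, i.e. with
  \<open>L(\<gamma>, x) = 2t\<close>. If an active multiplier is definite, it can be perturbed in every coordinate,
  which forces feasibility and complementary slackness, so \<open>(x, t) \<in> D\<close>. If the active face \<open>F\<close>
  is semidefinite, the dimension hypothesis provides \<open>v \<noteq> 0\<close> in \<open>V(F)\<close> on which \<open>b(\<gamma>) \<bullet> v\<close> is
  constant over \<open>F\<close>; along \<open>\<plusminus>v\<close> all of \<open>F\<close> stays active, and the first points where the
  inequalities become tight have strictly larger active faces, with \<open>(x, t)\<close> between them. If
  nothing is active, decreasing \<open>t\<close> makes some multiplier active. The polyhedrality of \<open>\<Gamma>\<close>
  enters through Minkowski--Weyl: only finitely many of the constraints \<open>L(\<gamma>, x) \<le> 2t\<close> matter.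
  Finally \<open>Opt\<close> and \<open>Opt\<^sub>S\<^sub>D\<^sub>P\<close> are the infima of \<open>t\<close> over \<open>D\<close> and \<open>D\<^sub>S\<^sub>D\<^sub>P\<close>, up to the factor 2.
\<close>

section \<open>Polyhedra\<close>

lemma polyhedron_finite_halfspaces:
  fixes S :: "'a::euclidean_space set"
  assumes "polyhedron S"
  obtains K where "finite K" "S = {x. \<forall>ab\<in>K. fst ab \<bullet> x \<le> snd ab}"
proof -
  obtain F where F: "finite F" "S = \<Inter> F" "\<forall>h\<in>F. \<exists>a b. a \<noteq> 0 \<and> h = {x. a \<bullet> x \<le> b}"
    using assms unfolding polyhedron_def by blast
  then have "\<forall>h\<in>F. \<exists>ab. h = {x. fst ab \<bullet> x \<le> snd ab}" by fastforce
  then obtain f where f: "\<forall>h\<in>F. h = {x. fst (f h) \<bullet> x \<le> snd (f h)}" by metis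
  show thesis
  proof (rule that)
    show "finite (f ` F)" using F(1) by simp
    show "S = {x. \<forall>ab\<in>f ` F. fst ab \<bullet> x \<le> snd ab}" using F(2) f by auto
  qed
qed

lemma convex_cone_polar: "convex_cone {z. \<forall>g\<in>G. g \<bullet> z \<le> 0}"
  unfolding convex_cone_iff
  by (auto simp: inner_add_right intro: add_nonpos_nonpos mult_nonneg_nonpos)

lemma conic_polyhedron_eq_polar:
  fixes P :: "'a::euclidean_space set"
  assumes "polyhedron P" "conic P" "0 \<in> P"
  obtains H where "finite H" "P = {y. \<forall>h\<in>H. h \<bullet> y \<le> 0}"
proof -
  obtain K where K: "finite K" "P = {x. \<forall>ab\<in>K. fst ab \<bullet> x \<le> snd ab}"
    using assms(1) polyhedron_finite_halfspaces by blast
  have nonneg: "0 \<le> snd ab" if "ab \<in> K" for ab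
    using assms(3) that unfolding K(2) by simp
  have polar: "h \<bullet> y \<le> 0" if y: "y \<in> P" and hb: "(h, \<beta>) \<in> K" for y h \<beta>
  proof (rule ccontr)
    assume "\<not> h \<bullet> y \<le> 0"
    then have pos: "h \<bullet> y > 0" by simp
    \<comment> \<open>scaling \<open>y\<close> up pushes it across the halfspace \<open>h \<bullet> x \<le> \<beta>\<close>\<close>
    define \<mu> where "\<mu> = (\<beta> + 1) / (h \<bullet> y)"
    have "\<mu> \<ge> 0" using pos nonneg[OF hb] by (simp add: \<mu>_def)
    then have "\<mu> *\<^sub>R y \<in> P" using assms(2) y by (simp add: conic_def)
    then have "h \<bullet> (\<mu> *\<^sub>R y) \<le> \<beta>" using K(2) hb by fastforce
    moreover have "h \<bullet> (\<mu> *\<^sub>R y) = \<beta> + 1" using pos by (simp add: \<mu>_def)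
    ultimately show False by simp
  qed
  have "P = {y. \<forall>h\<in>fst ` K. h \<bullet> y \<le> 0}"
  proof (intro equalityI subsetI)
    fix y assume "y \<in> P"
    then show "y \<in> {y. \<forall>h\<in>fst ` K. h \<bullet> y \<le> 0}" using polar by fastforce
  next
    fix y assume y: "y \<in> {y. \<forall>h\<in>fst ` K. h \<bullet> y \<le> 0}"
    have "fst ab \<bullet> y \<le> snd ab" if "ab \<in> K" for ab
      using y that nonneg[OF that] by fastforce
    then show "y \<in> P" unfolding K(2) by blast
  qed
  then show thesis using K(1) that by blast
qed

lemma separate_from_finite_cone:
  fixes H :: "'a::euclidean_space set"
  assumes "finite H" "x \<notin> convex_cone hull H"
  obtains w where "w \<bullet> x < 0" "\<And>h. h \<in> H \<Longrightarrow> 0 \<le> w \<bullet> h"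
proof -
  obtain w \<beta> where w: "w \<bullet> x < \<beta>" "\<forall>y\<in>convex_cone hull H. \<beta> < w \<bullet> y"
    using separating_hyperplane_closed_point[OF convex_convex_cone_hull
        closed_convex_cone_hull[OF assms(1)] assms(2)] by blast
  have \<beta>: "\<beta> < 0" using w(2) convex_cone_hull_contains_0 by fastforce
  have "0 \<le> w \<bullet> h" if h: "h \<in> H" for h
  proof (rule ccontr)
    assume "\<not> 0 \<le> w \<bullet> h"
    then have neg: "w \<bullet> h < 0" by simp
    have "(\<beta> / (w \<bullet> h)) *\<^sub>R h \<in> convex_cone hull H"
      using neg \<beta> h by (intro convex_cone_hull_mul hull_inc) (auto simp: divide_nonpos_neg)
    then have "\<beta> < w \<bullet> ((\<beta> / (w \<bullet> h)) *\<^sub>R h)" using w(2) by blast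
    then show False using neg by simp
  qed
  then show thesis using w(1) \<beta> by (intro that[of w]) auto
qed

lemma polar_of_finite_cone_is_finite_cone:
  fixes G :: "'a::euclidean_space set"
  assumes "finite G"
  obtains H where "finite H" "{z. \<forall>g\<in>G. g \<bullet> z \<le> 0} = convex_cone hull H"
proof -
  obtain H where H: "finite H" "convex_cone hull G = {y. \<forall>h\<in>H. h \<bullet> y \<le> 0}"
    using conic_polyhedron_eq_polar[OF polyhedron_convex_cone_hull[OF assms]
        conic_convex_cone_hull convex_cone_hull_contains_0] by blast
  have "convex_cone hull H \<subseteq> {z. \<forall>g\<in>G. g \<bullet> z \<le> 0}"
  proof (rule hull_minimal)
    show "H \<subseteq> {z. \<forall>g\<in>G. g \<bullet> z \<le> 0}"
      using H(2) hull_inc[of _ G] by (fastforce simp: inner_commute)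
  qed (rule convex_cone_polar)
  moreover have "z \<in> convex_cone hull H" if z: "\<forall>g\<in>G. g \<bullet> z \<le> 0" for z
  proof (rule ccontr)
    assume "z \<notin> convex_cone hull H"
    then obtain w where w: "w \<bullet> z < 0" "\<And>h. h \<in> H \<Longrightarrow> 0 \<le> w \<bullet> h"
      using separate_from_finite_cone[OF H(1)] by blast
    have "-w \<in> convex_cone hull G" using w(2) unfolding H(2) by (simp add: inner_commute)
    moreover have "convex_cone hull G \<subseteq> {y. \<forall>g\<in>{z}. g \<bullet> y \<le> 0}"
      using z by (intro hull_minimal convex_cone_polar) (auto simp: inner_commute)
    ultimately show False using w(1) by (auto simp: inner_commute)
  qed
  ultimately show thesis using that H(1) by blast
qed

lemma convex_cone_hull_rescale:
  assumes "\<And>h. h \<in> H \<Longrightarrow> 0 < r h"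
  shows "convex_cone hull ((\<lambda>h. r h *\<^sub>R h) ` H) = convex_cone hull H"
proof (intro equalityI hull_minimal convex_cone_convex_cone_hull image_subsetI subsetI)
  show "r h *\<^sub>R h \<in> convex_cone hull H" if "h \<in> H" for h
    using that assms by (intro convex_cone_hull_mul hull_inc) (auto simp: less_imp_le)
  show "h \<in> convex_cone hull ((\<lambda>h. r h *\<^sub>R h) ` H)" if "h \<in> H" for h
  proof -
    have "(1 / r h) *\<^sub>R (r h *\<^sub>R h) \<in> convex_cone hull ((\<lambda>h. r h *\<^sub>R h) ` H)"
      using that assms by (intro convex_cone_hull_mul hull_inc) (auto simp: less_imp_le)
    then show ?thesis using assms[OF that] by simp
  qed
qed

lemma affine_nonpos_on_hull_plus_cone:
  fixes l :: "'a::real_inner"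
  assumes "\<And>u. u \<in> U \<Longrightarrow> c + l \<bullet> u \<le> 0" "\<And>t. t \<in> T \<Longrightarrow> l \<bullet> t \<le> 0"
    and "u \<in> convex hull U" "w \<in> convex_cone hull T"
  shows "c + l \<bullet> (u + w) \<le> 0"
proof -
  have "convex hull U \<subseteq> {u. l \<bullet> u \<le> - c}"
    using assms(1) by (intro hull_minimal convex_halfspace_le) (fastforce dest: assms(1))
  moreover have "convex_cone hull T \<subseteq> {z. \<forall>g\<in>{l}. g \<bullet> z \<le> 0}"
    using assms(2) by (intro hull_minimal convex_cone_polar) auto
  ultimately show ?thesis using assms(3,4) by (force simp: inner_add_right)
qed

text \<open>Homogenization: the polyhedron \<open>{x. \<forall>(a, \<beta>)\<in>K. a \<bullet> x \<le> \<beta>}\<close> is the slice at height 1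
  of a finitely generated cone, whose generators may be scaled to height 0 or 1.\<close>
lemma polyhedron_homogenized_generators:
  fixes K :: "('a::euclidean_space \<times> real) set"
  assumes "finite K"
  obtains H where "finite H" "\<forall>h\<in>H. snd h = 0 \<or> snd h = 1"
    "convex_cone hull H = {z. 0 \<le> snd z \<and> (\<forall>ab\<in>K. fst ab \<bullet> fst z \<le> snd ab * snd z)}"
proof -
  define G :: "('a \<times> real) set" where "G = insert (0, -1) ((\<lambda>ab. (fst ab, - snd ab)) ` K)"
  obtain H0 where H0: "finite H0" "{z. \<forall>g\<in>G. g \<bullet> z \<le> 0} = convex_cone hull H0"
    using polar_of_finite_cone_is_finite_cone[of G] assms unfolding G_def by blast
  have cone: "z \<in> convex_cone hull H0 \<longleftrightarrow>
      0 \<le> snd z \<and> (\<forall>ab\<in>K. fst ab \<bullet> fst z \<le> snd ab * snd z)" for z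
    unfolding H0(2)[symmetric] G_def by (cases z) (auto simp: inner_Pair)
  have snd_H0: "0 \<le> snd h" if "h \<in> H0" for h
    using cone[of h] hull_inc[OF that] by simp
  define H where "H = (\<lambda>h. (if snd h = 0 then 1 else 1 / snd h) *\<^sub>R h) ` H0"
  have cone_H: "convex_cone hull H = convex_cone hull H0"
    unfolding H_def
  proof (rule convex_cone_hull_rescale)
    fix h assume "h \<in> H0"
    then show "0 < (if snd h = 0 then 1 else 1 / snd h)" using snd_H0[of h] by simp
  qed
  show thesis
  proof (rule that)
    show "finite H" unfolding H_def using H0(1) by simp
    show "\<forall>h\<in>H. snd h = 0 \<or> snd h = 1"
    proof
      fix h assume "h \<in> H"
      then obtain h0 where "h = (if snd h0 = 0 then 1 else 1 / snd h0) *\<^sub>R h0"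
        unfolding H_def by blast
      then show "snd h = 0 \<or> snd h = 1" by (cases "snd h0 = 0") auto
    qed
    show "convex_cone hull H = {z. 0 \<le> snd z \<and> (\<forall>ab\<in>K. fst ab \<bullet> fst z \<le> snd ab * snd z)}"
      unfolding cone_H by (simp add: set_eq_iff cone)
  qed
qed

lemma convex_cone_hull_height_one:
  fixes H :: "('a::euclidean_space \<times> real) set"
  assumes "\<forall>h\<in>H. snd h = 0 \<or> snd h = 1" "(x, 1) \<in> convex_cone hull H"
  shows "\<exists>u\<in>convex hull (fst ` {h\<in>H. snd h = 1}).
           \<exists>w\<in>convex_cone hull (fst ` {h\<in>H. snd h = 0}). x = u + w"
proof -
  have split_H: "H = {h\<in>H. snd h = 1} \<union> {h\<in>H. snd h = 0}" using assms(1) by blast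
  have "(x, 1) \<in> convex_cone hull ({h\<in>H. snd h = 1} \<union> {h\<in>H. snd h = 0})"
    using assms(2) by (simp only: split_H[symmetric])
  then obtain p q where p: "p \<in> convex_cone hull {h\<in>H. snd h = 1}"
      and q: "q \<in> convex_cone hull {h\<in>H. snd h = 0}" and xpq: "(x, 1) = p + q"
    unfolding convex_cone_hull_Un by blast
  have "convex_cone hull {h\<in>H. snd h = 0} \<subseteq> {z. snd z = 0}"
    by (intro hull_minimal subspace_imp_convex_cone linear_subspace_kernel linear_snd) auto
  then have "snd q = 0" using q by blast
  then have "snd p = 1" "x = fst p + fst q"
    using xpq by (metis add.right_neutral snd_add snd_conv, metis fst_add fst_conv)
  have "{z. snd z = 1} = (UNIV :: 'a set) \<times> {1}" by auto
  then have "convex {z::'a \<times> real. snd z = 1}"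
    by (metis convex_Times convex_UNIV convex_singleton)
  then have hull1: "convex hull {h\<in>H. snd h = 1} \<subseteq> {z. snd z = 1}"
    by (intro hull_minimal) auto
  \<comment> \<open>a point of the cone at height 1 is a convex combination, not a proper multiple\<close>
  obtain y \<mu> where y: "y \<in> convex hull {h\<in>H. snd h = 1}" and py: "p = \<mu> *\<^sub>R y"
    using p \<open>snd p = 1\<close> unfolding convex_cone_hull_convex_hull by auto
  have "snd y = 1" using hull1 y by blast
  then have "\<mu> = 1" using \<open>snd p = 1\<close> py by simp
  then have p1: "p \<in> convex hull {h\<in>H. snd h = 1}" using py y by simp
  show ?thesis
  proof (intro bexI)
    show "x = fst p + fst q" by fact
    show "fst p \<in> convex hull (fst ` {h\<in>H. snd h = 1})"
      using p1 unfolding convex_hull_linear_image[OF linear_fst, symmetric] by blast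
    show "fst q \<in> convex_cone hull (fst ` {h\<in>H. snd h = 0})"
      using q unfolding convex_cone_hull_linear_image[OF linear_fst] by blast
  qed
qed

lemma polyhedron_convex_hull_plus_cone:
  fixes S :: "'a::euclidean_space set"
  assumes "polyhedron S" "S \<noteq> {}"
  obtains U T where "finite U" "finite T" "U \<noteq> {}" "U \<subseteq> S"
    "\<forall>x\<in>S. \<forall>t\<in>T. \<forall>\<mu>\<ge>0. x + \<mu> *\<^sub>R t \<in> S"
    "\<forall>x\<in>S. \<exists>u\<in>convex hull U. \<exists>w\<in>convex_cone hull T. x = u + w"
proof -
  obtain K where K: "finite K" "S = {x. \<forall>ab\<in>K. fst ab \<bullet> x \<le> snd ab}"
    using polyhedron_finite_halfspaces assms(1) by blast
  obtain H where H: "finite H" "\<forall>h\<in>H. snd h = 0 \<or> snd h = 1"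
    and cone: "convex_cone hull H = {z. 0 \<le> snd z \<and> (\<forall>ab\<in>K. fst ab \<bullet> fst z \<le> snd ab * snd z)}"
    by (rule polyhedron_homogenized_generators[OF K(1)])
  have HK: "fst ab \<bullet> fst h \<le> snd ab * snd h" if "h \<in> H" "ab \<in> K" for h ab
    using hull_inc[where P=convex_cone, OF that(1)] that(2) unfolding cone by blast
  define U where "U = fst ` {h\<in>H. snd h = 1}"
  define T where "T = fst ` {h\<in>H. snd h = 0}"
  have rep: "\<forall>x\<in>S. \<exists>u\<in>convex hull U. \<exists>w\<in>convex_cone hull T. x = u + w"
  proof
    fix x assume "x \<in> S"
    then have "(x, 1) \<in> convex_cone hull H" unfolding cone K(2) by simp
    then show "\<exists>u\<in>convex hull U. \<exists>w\<in>convex_cone hull T. x = u + w"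
      unfolding U_def T_def by (rule convex_cone_hull_height_one[OF H(2)])
  qed
  show thesis
  proof (rule that)
    show "finite U" "finite T" unfolding U_def T_def using H(1) by simp_all
    show "U \<noteq> {}"
    proof -
      obtain x where "x \<in> S" using assms(2) by blast
      then obtain u where "u \<in> convex hull U" using rep by blast
      then show ?thesis by auto
    qed
    show "U \<subseteq> S"
    proof
      fix u assume "u \<in> U"
      then obtain h where h: "h \<in> H" "snd h = 1" "u = fst h" unfolding U_def by blast
      have "fst ab \<bullet> u \<le> snd ab" if "ab \<in> K" for ab
        using HK[OF h(1) that] h by simp
      then show "u \<in> S" unfolding K(2) by blast
    qed
    show "\<forall>x\<in>S. \<forall>t\<in>T. \<forall>\<mu>\<ge>0. x + \<mu> *\<^sub>R t \<in> S"
    proof (intro ballI allI impI)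
      fix x t and \<mu> :: real assume "x \<in> S" "t \<in> T" "0 \<le> \<mu>"
      obtain h where h: "h \<in> H" "snd h = 0" "t = fst h" using \<open>t \<in> T\<close> unfolding T_def by blast
      have "fst ab \<bullet> (x + \<mu> *\<^sub>R t) \<le> snd ab" if "ab \<in> K" for ab
      proof -
        have "\<mu> * (fst ab \<bullet> t) \<le> 0"
          using HK[OF h(1) that] h \<open>0 \<le> \<mu>\<close> by (simp add: mult_nonneg_nonpos)
        moreover have "fst ab \<bullet> x \<le> snd ab" using \<open>x \<in> S\<close> that unfolding K(2) by blast
        ultimately show ?thesis by (simp add: inner_add_right)
      qed
      then show "x + \<mu> *\<^sub>R t \<in> S" unfolding K(2) by blast
    qed
  qed (rule rep)
qed

lemma quadratic_nonpos_bounded: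
  fixes C a \<beta> s :: real
  assumes "0 < \<beta>" "C + s * a + s\<^sup>2 * \<beta> \<le> 0"
  shows "s \<le> max 1 ((\<bar>C\<bar> + \<bar>a\<bar>) / \<beta>)"
proof (cases "s \<le> 1")
  case False
  have "s * (s * \<beta>) \<le> - C - s * a" using assms(2) by (simp add: power2_eq_square algebra_simps)
  also have "\<dots> \<le> \<bar>C\<bar> + s * \<bar>a\<bar>"
    using False abs_ge_minus_self[of C] mult_left_mono[OF abs_ge_minus_self[of a], of s] by simp
  also have "\<dots> \<le> s * (\<bar>C\<bar> + \<bar>a\<bar>)"
    using False mult_right_mono[of 1 s "\<bar>C\<bar>"] by (simp add: distrib_left)
  finally have "s * \<beta> \<le> \<bar>C\<bar> + \<bar>a\<bar>" using False by (simp add: mult_le_cancel_left_pos)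
  then have "s \<le> (\<bar>C\<bar> + \<bar>a\<bar>) / \<beta>" using assms(1) by (simp add: pos_le_divide_eq)
  then show ?thesis by simp
qed simp

lemma eventually_at_right_nonpos:
  fixes h :: "real \<Rightarrow> real"
  assumes "continuous_on UNIV h" "h s \<le> 0" "h s = 0 \<Longrightarrow> \<forall>s'. h s' \<le> 0"
  shows "\<forall>\<^sub>F s' in at_right s. h s' \<le> 0"
proof (cases "h s = 0")
  case True
  then show ?thesis using assms(3) by simp
next
  case False
  have "(h \<longlongrightarrow> h s) (at_right s)"
    using assms(1) by (simp add: continuous_on_eq_continuous_at isCont_def filterlim_at_split)
  moreover have "h s < 0" using assms(2) False by simp
  ultimately have "\<forall>\<^sub>F s' in at_right s. h s' < 0" by (rule order_tendstoD(2))
  then show ?thesis by eventually_elim simp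
qed

lemma subspace_orthogonal_nonzero_exists:
  fixes V W :: "'a::euclidean_space set"
  assumes "subspace V" "dim W < dim V"
  obtains v where "v \<in> V" "v \<noteq> 0" "\<And>w. w \<in> W \<Longrightarrow> orthogonal w v"
proof -
  define P where "P = {y. \<forall>x\<in>span W. orthogonal x y}"
  have subP: "subspace P" unfolding P_def by (rule subspace_orthogonal_to_vectors)
  have "dim {y \<in> UNIV. \<forall>x\<in>span W. orthogonal x y} + dim (span W) = dim (UNIV :: 'a set)"
    by (rule dim_subspace_orthogonal_to_vectors) auto
  then have dimP: "dim P + dim W = DIM('a)" unfolding P_def by simp
  have "dim {x + y |x y. x \<in> V \<and> y \<in> P} + dim (V \<inter> P) = dim V + dim P"
    by (rule dim_sums_Int[OF assms(1) subP])
  moreover have "dim {x + y |x y. x \<in> V \<and> y \<in> P} \<le> DIM('a)" by (rule dim_subset_UNIV)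
  ultimately have "dim (V \<inter> P) \<noteq> 0" using dimP assms(2) by linarith
  then obtain v where "v \<in> V \<inter> P" "v \<noteq> 0" unfolding dim_eq_0 by blast
  then show thesis using that span_base unfolding P_def by blast
qed

lemma convex_between:
  assumes "convex C" "p + s1 *\<^sub>R d \<in> C" "p - s2 *\<^sub>R d \<in> C" "0 < s1" "0 < s2"
  shows "p \<in> C"
proof -
  define u where "u = s2 / (s1 + s2)"
  have u: "0 \<le> u" "u \<le> 1" using assms(4,5) unfolding u_def by auto
  have "u *\<^sub>R (p + s1 *\<^sub>R d) + (1 - u) *\<^sub>R (p - s2 *\<^sub>R d) = p + (u * s1 - (1 - u) * s2) *\<^sub>R d"
    by (simp add: algebra_simps)
  also have "u * s1 - (1 - u) * s2 = 0" using assms(4,5) unfolding u_def by (simp add: field_simps)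
  finally have "u *\<^sub>R (p + s1 *\<^sub>R d) + (1 - u) *\<^sub>R (p - s2 *\<^sub>R d) = p" by simp
  moreover have "u *\<^sub>R (p + s1 *\<^sub>R d) + (1 - u) *\<^sub>R (p - s2 *\<^sub>R d) \<in> C"
    using u by (intro convexD[OF assms(1-3)]) auto
  ultimately show ?thesis by simp
qed

lemma convex_hull_shift_closed:
  assumes "\<And>q. q \<in> D \<Longrightarrow> q + d \<in> D" "p \<in> convex hull D"
  shows "p + d \<in> convex hull D"
proof -
  have "d + p \<in> (+) d ` (convex hull D)" using assms(2) by blast
  also have "\<dots> = convex hull ((+) d ` D)" by (rule convex_hull_translation[symmetric])
  also have "\<dots> \<subseteq> convex hull D" using assms(1) by (intro hull_mono) (auto simp: add.commute)
  finally show ?thesis by (simp add: add.commute)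
qed

lemma convex_hull_snd_lower:
  fixes D :: "('a::real_vector \<times> real) set"
  assumes "p \<in> convex hull D"
  obtains d where "d \<in> D" "snd d \<le> snd p"
proof (rule ccontr)
  assume "\<not> thesis"
  then have "D \<subseteq> {q. snd p < snd q}" using that by (meson not_le subsetI mem_Collect_eq)
  moreover have "{q. snd p < snd q} = (UNIV :: 'a set) \<times> {snd p<..}" by auto
  then have "convex {q :: 'a \<times> real. snd p < snd q}"
    by (metis convex_Times convex_UNIV convex_real_interval(3))
  ultimately have "convex hull D \<subseteq> {q. snd p < snd q}" by (rule hull_minimal)
  then show False using assms by auto
qed

section \<open>Quadratic forms and positive semidefinite matrices\<close>

lemma inner_matrix_vector_sum: "z \<bullet> (M *v w) = (\<Sum>i\<in>UNIV. \<Sum>j\<in>UNIV. z$i * M$i$j * w$j)"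
  by (simp add: inner_vec_def matrix_vector_mult_def sum_distrib_left mult.assoc)

lemma symm_iff: "symm M \<longleftrightarrow> (\<forall>i j. M$i$j = M$j$i)"
  unfolding symm_def transpose_def by (auto simp: vec_eq_iff)

lemma symm_inner_commute:
  assumes "symm M"
  shows "v \<bullet> (M *v x) = x \<bullet> (M *v v)"
proof -
  have "v \<bullet> (M *v x) = (transpose M *v v) \<bullet> x"
    by (simp add: dot_lmul_matrix[symmetric])
  then show ?thesis using assms unfolding symm_def by (simp add: inner_commute)
qed

lemma scaleR_matrix_vector: "(e *\<^sub>R M) *v z = e *\<^sub>R (M *v z)"
  for M :: "real^'n^'m"
  by (simp add: scaleR_matrix_vector_assoc)

lemma qf_add_scaleR:
  "qf M p r (x + s *\<^sub>R v) = qf M p r x + s * (x \<bullet> (M *v v) + v \<bullet> (M *v x) + 2 * (p \<bullet> v))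
     + s\<^sup>2 * (v \<bullet> (M *v v))"
  unfolding qf_def
  by (simp add: matrix_vector_right_distrib matrix_vector_mult_scaleR inner_add_left
      inner_add_right algebra_simps power2_eq_square)

lemma symm_Agam: "symm A0 \<Longrightarrow> (\<forall>k. symm (A k)) \<Longrightarrow> symm (Agam A0 A g)"
  unfolding symm_iff Agam_def by simp

lemma sum_matrix_vector_mult: "(\<Sum>k\<in>S. f k) *v v = (\<Sum>k\<in>S. f k *v v)"
  by (induction S rule: infinite_finite_induct) (auto simp: matrix_vector_mult_add_rdistrib)

lemma Agam_matrix_vector: "Agam A0 A g *v v = A0 *v v + (\<Sum>k\<in>UNIV. g$k *\<^sub>R (A k *v v))"
  unfolding Agam_def
  by (simp add: matrix_vector_mult_add_rdistrib sum_matrix_vector_mult scaleR_matrix_vector)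

lemma qf_Agam:
  "qf A0 b0 c0 y + (\<Sum>k\<in>UNIV. g$k * qf (A k) (b k) (c k) y)
     = qf (Agam A0 A g) (bgam b0 b g) (c0 + (\<Sum>k\<in>UNIV. g$k * c k)) y"
  unfolding qf_def Agam_matrix_vector bgam_def
  by (simp add: inner_add_left inner_add_right inner_sum_left inner_sum_right sum_distrib_left
      sum.distrib algebra_simps)

definition outer :: "real^'n \<Rightarrow> real^'n^'n" where
  "outer w = (\<chi> i j. w$i * w$j)"

lemma symm_outer: "symm (outer w)"
  unfolding symm_iff outer_def by (simp add: mult.commute)

lemma inner_outer_matrix_vector: "z \<bullet> (outer w *v z) = (w \<bullet> z)\<^sup>2"
  unfolding inner_matrix_vector_sum power2_eq_square inner_vec_def outer_def
  by (simp add: sum_product algebra_simps matrix_vector_mult_def sum_distrib_left)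

lemma frob_outer: "frob M (outer w) = w \<bullet> (M *v w)"
  unfolding inner_matrix_vector_sum outer_def frob_def by (simp add: algebra_simps)

lemma frob_diff: "frob M (P - Q) = frob M P - frob M Q"
  unfolding frob_def by (simp add: algebra_simps sum_subtractf)

lemma frob_linear_combination: "frob M (u *\<^sub>R P + v *\<^sub>R Q) = u * frob M P + v * frob M Q"
  unfolding frob_def by (simp add: algebra_simps sum.distrib sum_distrib_left)

lemma frob_Agam: "frob (Agam A0 A g) P = frob A0 P + (\<Sum>k\<in>UNIV. g$k * frob (A k) P)"
proof -
  have "frob (Agam A0 A g) P = frob A0 P + (\<Sum>i\<in>UNIV. \<Sum>j\<in>UNIV. \<Sum>k\<in>UNIV. g$k * A k $i$j * P$i$j)"
    unfolding frob_def Agam_def by (simp add: distrib_right sum.distrib sum_distrib_right)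
  also have "(\<Sum>i\<in>UNIV. \<Sum>j\<in>UNIV. \<Sum>k\<in>UNIV. g$k * A k $i$j * P$i$j)
      = (\<Sum>i\<in>UNIV. \<Sum>k\<in>UNIV. \<Sum>j\<in>UNIV. g$k * A k $i$j * P$i$j)"
    by (rule sum.cong[OF refl], rule sum.swap)
  also have "\<dots> = (\<Sum>k\<in>UNIV. \<Sum>i\<in>UNIV. \<Sum>j\<in>UNIV. g$k * A k $i$j * P$i$j)"
    by (rule sum.swap)
  also have "\<dots> = (\<Sum>k\<in>UNIV. g$k * frob (A k) P)"
    unfolding frob_def by (simp add: sum_distrib_left mult.assoc)
  finally show ?thesis .
qed

lemma inner_axis_matrix_vector_axis: "axis i a \<bullet> (M *v axis j b) = a * b * M$i$j"
  unfolding inner_matrix_vector_sum axis_def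
  by (simp add: if_distrib[of "\<lambda>x. x * _"] if_distrib[of "\<lambda>x. _ * x"] cong: if_cong)

lemma psd_diag_nonneg: "psd P \<Longrightarrow> 0 \<le> P$i$i"
  unfolding psd_def using inner_axis_matrix_vector_axis[of i 1 P i 1] by (metis mult_1)

lemma linear_nonneg_imp_slope_zero:
  fixes p q :: real
  assumes "\<And>t. 0 \<le> t * p + q"
  shows "p = 0"
proof (rule ccontr)
  assume "p \<noteq> 0"
  then have "0 \<le> (- (\<bar>q\<bar> + 1) / p) * p + q" using assms by blast
  with \<open>p \<noteq> 0\<close> show False by (simp add: abs_if split: if_splits)
qed

lemma psd_zero_diag_imp_zero:
  assumes "psd P" "P$i$i = 0"
  shows "P$i$j = 0"
proof (cases "i = j")
  case True
  then show ?thesis using assms by simp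
next
  case False
  have "0 \<le> t * (P$i$j + P$j$i) + P$j$j" for t
  proof -
    have "0 \<le> (axis i t + axis j 1) \<bullet> (P *v (axis i t + axis j 1))"
      using assms(1) unfolding psd_def by blast
    then show ?thesis using False assms(2)
      by (simp add: matrix_vector_right_distrib inner_add_left inner_add_right
          inner_axis_matrix_vector_axis algebra_simps)
  qed
  then have "P$i$j + P$j$i = 0" by (rule linear_nonneg_imp_slope_zero)
  moreover have "P$i$j = P$j$i" using assms(1) unfolding psd_def symm_iff by blast
  ultimately show ?thesis by simp
qed

lemma psd_cauchy_schwarz:
  assumes "psd P"
  shows "(x \<bullet> (P *v y))\<^sup>2 \<le> (x \<bullet> (P *v x)) * (y \<bullet> (P *v y))"
proof -
  have quadratic: "0 \<le> (x \<bullet> (P *v x)) + 2 * t * (x \<bullet> (P *v y)) + t\<^sup>2 * (y \<bullet> (P *v y))" for t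
  proof -
    have "0 \<le> (x + t *\<^sub>R y) \<bullet> (P *v (x + t *\<^sub>R y))" using assms unfolding psd_def by blast
    moreover have "y \<bullet> (P *v x) = x \<bullet> (P *v y)"
      using assms unfolding psd_def by (simp add: symm_inner_commute)
    ultimately show ?thesis
      by (simp add: matrix_vector_right_distrib matrix_vector_mult_scaleR inner_add_left
          inner_add_right algebra_simps power2_eq_square)
  qed
  show ?thesis
  proof (cases "y \<bullet> (P *v y) = 0")
    case True
    have "0 \<le> t * (2 * (x \<bullet> (P *v y))) + x \<bullet> (P *v x)" for t
      using quadratic[of t] True by (simp add: algebra_simps)
    then have "x \<bullet> (P *v y) = 0" using linear_nonneg_imp_slope_zero by fastforce
    then show ?thesis using True by simp
  next
    case False
    then have pos: "y \<bullet> (P *v y) > 0" using assms unfolding psd_def by (simp add: order_less_le)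
    \<comment> \<open>minimize the quadratic in \<open>t\<close>\<close>
    have "0 \<le> (x \<bullet> (P *v x)) - (x \<bullet> (P *v y))\<^sup>2 / (y \<bullet> (P *v y))"
      using quadratic[of "- (x \<bullet> (P *v y)) / (y \<bullet> (P *v y))"] pos
      by (simp add: power2_eq_square field_simps)
    then show ?thesis using pos by (simp add: field_simps)
  qed
qed

text \<open>One step of a Cholesky factorization: subtracting the rank-one matrix built from the
  \<open>i\<close>-th column keeps \<open>P\<close> positive semidefinite and clears the \<open>i\<close>-th row.\<close>
lemma psd_deflate:
  assumes "psd P" "0 < P$i$i"
  defines "w \<equiv> (1 / sqrt (P$i$i)) *\<^sub>R (\<chi> k. P$k$i)"
  shows "psd (P - outer w)"
    and "{k. \<exists>l. (P - outer w)$k$l \<noteq> 0} \<subseteq> {k. \<exists>l. P$k$l \<noteq> 0} - {i}"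
proof -
  have w: "w$k * w$l = P$k$i * P$l$i / P$i$i" for k l
    using assms(2) by (simp add: w_def real_sqrt_mult[symmetric] power2_eq_square[symmetric])
  have symP: "P$k$l = P$l$k" for k l using assms(1) unfolding psd_def symm_iff by blast
  show "psd (P - outer w)"
    unfolding psd_def
  proof (intro conjI allI)
    show "symm (P - outer w)" using symP symm_outer[of w] unfolding symm_iff by simp
    fix z
    have wz: "w \<bullet> z = (z \<bullet> (P *v axis i 1)) / sqrt (P$i$i)"
      unfolding w_def inner_matrix_vector_sum
      by (simp add: inner_vec_def axis_def sum_divide_distrib mult.commute if_distrib cong: if_cong)
    have "(z \<bullet> (P *v axis i 1))\<^sup>2 \<le> (z \<bullet> (P *v z)) * P$i$i"
      using psd_cauchy_schwarz[OF assms(1), of z "axis i 1"]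
        inner_axis_matrix_vector_axis[of i 1 P i 1] by simp
    moreover have "z \<bullet> ((P - outer w) *v z) = z \<bullet> (P *v z) - (z \<bullet> (P *v axis i 1))\<^sup>2 / P$i$i"
      using assms(2)
      by (simp add: matrix_vector_mult_diff_rdistrib inner_diff_right inner_outer_matrix_vector
          wz power_divide)
    ultimately have "0 \<le> P$i$i * (z \<bullet> ((P - outer w) *v z))"
      using assms(2) by (simp add: field_simps)
    then show "0 \<le> z \<bullet> ((P - outer w) *v z)" using assms(2) by (simp add: zero_le_mult_iff)
  qed
  show "{k. \<exists>l. (P - outer w)$k$l \<noteq> 0} \<subseteq> {k. \<exists>l. P$k$l \<noteq> 0} - {i}"
  proof
    fix k assume "k \<in> {k. \<exists>l. (P - outer w)$k$l \<noteq> 0}"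
    then obtain l where kl: "(P - outer w)$k$l \<noteq> 0" by blast
    have "(P - outer w)$i$l = 0" using w[of i l] symP assms(2) by (simp add: outer_def)
    then have "k \<noteq> i" using kl by auto
    moreover have "P$k$i \<noteq> 0 \<or> P$k$l \<noteq> 0" using kl w[of k l] by (auto simp: outer_def)
    ultimately show "k \<in> {k. \<exists>l. P$k$l \<noteq> 0} - {i}" by blast
  qed
qed

lemma frob_psd_nonneg:
  assumes "psd M" "psd P"
  shows "0 \<le> frob M P"
  using assms(2)
proof (induction "card {i. \<exists>j. P$i$j \<noteq> 0}" arbitrary: P rule: less_induct)
  case less
  show ?case
  proof (cases "\<exists>i j. P$i$j \<noteq> 0")
    case False
    then have "P = 0" by (auto simp: vec_eq_iff)
    then show ?thesis by (simp add: frob_def)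
  next
    case True
    then obtain i j where ij: "P$i$j \<noteq> 0" by blast
    then have "0 < P$i$i"
      using psd_diag_nonneg[OF less.prems, of i] psd_zero_diag_imp_zero[OF less.prems, of i j]
      by linarith
    then obtain w where psd_rest: "psd (P - outer w)"
      and rows: "{k. \<exists>l. (P - outer w)$k$l \<noteq> 0} \<subseteq> {k. \<exists>l. P$k$l \<noteq> 0} - {i}"
      using psd_deflate[OF less.prems] by blast
    have "card {k. \<exists>l. (P - outer w)$k$l \<noteq> 0} < card {k. \<exists>l. P$k$l \<noteq> 0}"
      using ij by (intro card_mono[OF _ rows, THEN le_less_trans] card_Diff1_less) auto
    then have "0 \<le> frob M (P - outer w)" using less.hyps psd_rest by blast
    moreover have "0 \<le> w \<bullet> (M *v w)" using assms(1) unfolding psd_def by blast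
    ultimately show ?thesis by (simp add: frob_diff frob_outer)
  qed
qed

lemma pd_quadratic_lower_bound:
  fixes M :: "real^'n^'n"
  assumes "pd M"
  obtains m where "0 < m" "\<And>z. m * (norm z)\<^sup>2 \<le> z \<bullet> (M *v z)"
proof -
  have cont: "continuous_on (sphere 0 1) (\<lambda>z. z \<bullet> (M *v z))"
    by (intro continuous_intros matrix_vector_mult_linear_continuous_on[THEN continuous_on_subset]) auto
  have "sphere (0::real^'n) 1 \<noteq> {}" by simp
  then obtain u where u: "u \<in> sphere 0 1" "\<And>z. z \<in> sphere 0 1 \<Longrightarrow> u \<bullet> (M *v u) \<le> z \<bullet> (M *v z)"
    using continuous_attains_inf[OF compact_sphere _ cont] by blast
  show thesis
  proof (rule that)
    have "u \<noteq> 0" using u(1) by auto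
    then show "0 < u \<bullet> (M *v u)" using assms unfolding pd_def by blast
    fix z :: "real^'n"
    show "(u \<bullet> (M *v u)) * (norm z)\<^sup>2 \<le> z \<bullet> (M *v z)"
    proof (cases "z = 0")
      case False
      then have "u \<bullet> (M *v u) \<le> (z /\<^sub>R norm z) \<bullet> (M *v (z /\<^sub>R norm z))" by (intro u(2)) simp
      also have "\<dots> = (z \<bullet> (M *v z)) / (norm z)\<^sup>2"
        by (simp add: matrix_vector_mult_scaleR power2_eq_square divide_inverse)
      finally show ?thesis using False by (simp add: pos_le_divide_eq)
    qed simp
  qed
qed

lemma pd_perturb:
  fixes M N :: "real^'n^'n"
  assumes "pd M" "symm N"
  obtains \<epsilon> where "0 < \<epsilon>" "\<And>e. \<bar>e\<bar> < \<epsilon> \<Longrightarrow> psd (M + e *\<^sub>R N)"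
proof -
  obtain m where m: "0 < m" "\<And>z. m * (norm z)\<^sup>2 \<le> z \<bullet> (M *v z)"
    using pd_quadratic_lower_bound[OF assms(1)] by blast
  obtain B where B: "0 < B" "\<And>z. norm (N *v z) \<le> B * norm z"
    using linear_bounded_pos[OF matrix_vector_mul_linear[of N]] by blast
  show thesis
  proof (rule that)
    show "0 < m / B" using m B by simp
    fix e :: real assume e: "\<bar>e\<bar> < m / B"
    show "psd (M + e *\<^sub>R N)"
      unfolding psd_def
    proof (intro conjI allI)
      show "symm (M + e *\<^sub>R N)" using assms unfolding pd_def symm_iff by simp
      fix z :: "real^'n"
      have "\<bar>z \<bullet> (N *v z)\<bar> \<le> norm z * norm (N *v z)" by (rule Cauchy_Schwarz_ineq2)
      also have "\<dots> \<le> norm z * (B * norm z)" using B(2) by (simp add: mult_left_mono)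
      finally have "\<bar>z \<bullet> (N *v z)\<bar> \<le> B * (norm z)\<^sup>2" by (simp add: power2_eq_square mult_ac)
      then have "\<bar>e\<bar> * \<bar>z \<bullet> (N *v z)\<bar> \<le> \<bar>e\<bar> * B * (norm z)\<^sup>2"
        by (simp add: mult_left_mono mult.assoc)
      also have "\<dots> \<le> m * (norm z)\<^sup>2"
        using e B(1) by (intro mult_right_mono) (simp_all add: pos_less_divide_eq)
      finally have "\<bar>e * (z \<bullet> (N *v z))\<bar> \<le> m * (norm z)\<^sup>2" by (simp add: abs_mult)
      moreover have "z \<bullet> ((M + e *\<^sub>R N) *v z) = z \<bullet> (M *v z) + e * (z \<bullet> (N *v z))"
        by (simp add: matrix_vector_mult_add_rdistrib scaleR_matrix_vector inner_add_right)
      ultimately show "0 \<le> z \<bullet> ((M + e *\<^sub>R N) *v z)"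
        using m(2)[of z] abs_ge_minus_self[of "e * (z \<bullet> (N *v z))"] by linarith
    qed
  qed
qed

lemma psd_convex_combination:
  fixes P Q :: "real^'k^'k"
  assumes "psd P" "psd Q" "0 \<le> u" "u \<le> 1"
  shows "psd (u *\<^sub>R P + (1 - u) *\<^sub>R Q)"
  unfolding psd_def
proof (intro conjI allI)
  show "symm (u *\<^sub>R P + (1 - u) *\<^sub>R Q)" using assms unfolding psd_def symm_iff by simp
  fix z :: "real^'k"
  have "0 \<le> z \<bullet> (P *v z)" "0 \<le> z \<bullet> (Q *v z)" using assms unfolding psd_def by auto
  then show "0 \<le> z \<bullet> ((u *\<^sub>R P + (1 - u) *\<^sub>R Q) *v z)"
    using assms(3,4)
    by (simp add: matrix_vector_mult_add_rdistrib scaleR_matrix_vector inner_add_right)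
qed

lemma sum_UNIV_option: "(\<Sum>i\<in>UNIV. f i) = f None + (\<Sum>i\<in>UNIV. f (Some i))"
  for f :: "'a::finite option \<Rightarrow> 'b::comm_monoid_add"
  unfolding UNIV_option_conv by (simp add: sum.reindex)

lemma frob_blk: "frob (blk c p M) (blk 1 x X) = c + 2 * (p \<bullet> x) + frob M X"
  unfolding frob_def blk_def sum_UNIV_option
  by (simp add: sum.distrib inner_vec_def algebra_simps sum_distrib_left)

lemma frob_blk_outer: "frob (blk c p M) (blk 1 x (outer x)) = qf M p c x"
  unfolding frob_blk frob_outer qf_def by simp

lemma inner_blk_matrix_vector:
  fixes w :: "real^('n::finite option)"
  defines "z \<equiv> \<chi> j. w$(Some j)"
  shows "w \<bullet> (blk c p M *v w) = c * (w$None)\<^sup>2 + 2 * w$None * (p \<bullet> z) + z \<bullet> (M *v z)"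
proof -
  have "w \<bullet> (blk c p M *v w) = w$None * c * w$None + (\<Sum>j\<in>UNIV. w$None * p$j * z$j)
     + (\<Sum>i\<in>UNIV. z$i * p$i * w$None) + (\<Sum>i\<in>UNIV. \<Sum>j\<in>UNIV. z$i * M$i$j * z$j)"
    unfolding inner_matrix_vector_sum z_def
    by (simp only: sum_UNIV_option blk_def vec_lambda_beta option.case sum.distrib add.assoc)
  also have "(\<Sum>j\<in>UNIV. w$None * p$j * z$j) = w$None * (p \<bullet> z)"
    by (simp add: inner_vec_def sum_distrib_left mult.assoc)
  also have "(\<Sum>i\<in>UNIV. z$i * p$i * w$None) = w$None * (p \<bullet> z)"
    by (simp add: inner_vec_def sum_distrib_left mult.commute mult.left_commute)
  also have "(\<Sum>i\<in>UNIV. \<Sum>j\<in>UNIV. z$i * M$i$j * z$j) = z \<bullet> (M *v z)"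
    by (simp only: inner_matrix_vector_sum)
  finally show ?thesis by (simp add: power2_eq_square)
qed

lemma symm_blk: "symm X \<Longrightarrow> symm (blk c p X)"
  unfolding symm_iff blk_def by (auto split: option.splits)

lemma psd_blk_outer: "psd (blk 1 x (outer x))"
  unfolding psd_def
proof (intro conjI allI)
  show "symm (blk 1 x (outer x))" by (rule symm_blk[OF symm_outer])
  fix w :: "real^'a option"
  have "w \<bullet> (blk 1 x (outer x) *v w) = (w$None + x \<bullet> (\<chi> j. w$(Some j)))\<^sup>2"
    unfolding inner_blk_matrix_vector inner_outer_matrix_vector
    by (simp add: power2_eq_square algebra_simps)
  then show "0 \<le> w \<bullet> (blk 1 x (outer x) *v w)" by simp
qed

text \<open>Schur complement: testing \<open>blk 1 x X\<close> on the vector \<open>(- x \<bullet> z, z)\<close>.\<close>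
lemma psd_blk_imp_psd_schur:
  assumes "psd (blk 1 x X)" "symm X"
  shows "psd (X - outer x)"
  unfolding psd_def
proof (intro conjI allI)
  show "symm (X - outer x)" using assms(2) symm_outer[of x] unfolding symm_iff by simp
  fix z :: "real^'a"
  define w :: "real^'a option" where "w = (\<chi> i. case i of None \<Rightarrow> - (x \<bullet> z) | Some j \<Rightarrow> z$j)"
  have wz: "(\<chi> j. w$(Some j)) = z" by (simp add: w_def vec_eq_iff)
  have "0 \<le> w \<bullet> (blk 1 x X *v w)" using assms(1) unfolding psd_def by blast
  also have "\<dots> = z \<bullet> (X *v z) - (x \<bullet> z)\<^sup>2"
    unfolding inner_blk_matrix_vector wz by (simp add: w_def power2_eq_square)
  also have "\<dots> = z \<bullet> ((X - outer x) *v z)"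
    by (simp add: matrix_vector_mult_diff_rdistrib inner_diff_right inner_outer_matrix_vector)
  finally show "0 \<le> z \<bullet> ((X - outer x) *v z)" .
qed

lemma blk_convex_combination:
  "blk 1 (u *\<^sub>R x + (1 - u) *\<^sub>R y) (u *\<^sub>R X + (1 - u) *\<^sub>R Y)
     = u *\<^sub>R blk 1 x X + (1 - u) *\<^sub>R blk 1 y Y"
  unfolding blk_def by (auto simp: vec_eq_iff algebra_simps split: option.splits)

section \<open>The SDP relaxation\<close>

lemma frob_blk_split: "frob (blk c p M) (blk 1 x X) = qf M p c x + frob M (X - outer x)"
  unfolding frob_blk qf_def frob_diff frob_outer by simp

lemma sdpfeas_outer:
  assumes "qfeas A b c I x"
  shows "sdpfeas A b c I x (outer x)"
  using assms unfolding sdpfeas_def qfeas_def frob_blk_outer by (simp add: psd_blk_outer symm_outer)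

lemma DD_subset_DSDP: "DD A0 b0 c0 A b c I \<subseteq> DSDP A0 b0 c0 A b c I"
proof (clarify)
  fix x t assume "(x, t) \<in> DD A0 b0 c0 A b c I"
  then have "qfeas A b c I x" "qf A0 b0 c0 x \<le> 2 * t" unfolding DD_def by auto
  then show "(x, t) \<in> DSDP A0 b0 c0 A b c I"
    unfolding DSDP_def by (auto intro!: exI[of _ "outer x"] sdpfeas_outer simp: frob_blk_outer)
qed

lemma convex_DSDP: "convex (DSDP A0 b0 c0 A b c I)"
proof (rule convexI)
  fix p q and u v :: real
  assume p: "p \<in> DSDP A0 b0 c0 A b c I" and q: "q \<in> DSDP A0 b0 c0 A b c I"
    and "0 \<le> u" "0 \<le> v" "u + v = 1"
  then have u: "0 \<le> u" "u \<le> 1" and v: "v = 1 - u" by auto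
  obtain x X t where P: "p = (x, t)" "sdpfeas A b c I x X" "frob (blk c0 b0 A0) (blk 1 x X) \<le> 2 * t"
    using p unfolding DSDP_def by auto
  obtain y Y s where Q: "q = (y, s)" "sdpfeas A b c I y Y" "frob (blk c0 b0 A0) (blk 1 y Y) \<le> 2 * s"
    using q unfolding DSDP_def by auto
  define z where "z = u *\<^sub>R x + (1 - u) *\<^sub>R y"
  define Z where "Z = u *\<^sub>R X + (1 - u) *\<^sub>R Y"
  have frob: "frob M (blk 1 z Z) = u * frob M (blk 1 x X) + (1 - u) * frob M (blk 1 y Y)" for M
    unfolding z_def Z_def blk_convex_combination frob_linear_combination ..
  have "sdpfeas A b c I z Z"
    unfolding sdpfeas_def
  proof (intro conjI ballI allI impI)
    show "symm Z" using P(2) Q(2) unfolding sdpfeas_def Z_def symm_iff by simp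
    show "psd (blk 1 z Z)"
      unfolding z_def Z_def blk_convex_combination
      using P(2) Q(2) u unfolding sdpfeas_def by (intro psd_convex_combination) auto
    show "frob (blk (c i) (b i) (A i)) (blk 1 z Z) \<le> 0" if "i \<in> I" for i
      using P(2) Q(2) u that unfolding sdpfeas_def frob
      by (auto intro!: add_nonpos_nonpos mult_nonneg_nonpos)
    show "frob (blk (c i) (b i) (A i)) (blk 1 z Z) = 0" if "i \<notin> I" for i
      using P(2) Q(2) that unfolding sdpfeas_def frob by simp
  qed
  moreover have "frob (blk c0 b0 A0) (blk 1 z Z) \<le> 2 * (u * t + (1 - u) * s)"
    using mult_left_mono[OF P(3) u(1)] mult_left_mono[OF Q(3), of "1 - u"] u(2)
    unfolding frob by (simp add: algebra_simps)
  ultimately have "(z, u * t + (1 - u) * s) \<in> DSDP A0 b0 c0 A b c I"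
    unfolding DSDP_def by auto
  then show "u *\<^sub>R p + v *\<^sub>R q \<in> DSDP A0 b0 c0 A b c I"
    unfolding P(1) Q(1) v z_def by simp
qed

lemma OptSDP_le_Opt: "OptSDP A0 b0 c0 A b c I \<le> Opt A0 b0 c0 A b c I"
  unfolding Opt_def OptSDP_def
proof (rule Inf_mono, clarify)
  fix x assume "qfeas A b c I x"
  then have "ereal (frob (blk c0 b0 A0) (blk 1 x (outer x)))
      \<in> {ereal (frob (blk c0 b0 A0) (blk 1 x X)) | x X. sdpfeas A b c I x X}"
    using sdpfeas_outer by blast
  then show "\<exists>z\<in>{ereal (frob (blk c0 b0 A0) (blk 1 x X)) | x X. sdpfeas A b c I x X}.
      z \<le> ereal (qf A0 b0 c0 x)"
    by (rule bexI[rotated]) (simp add: frob_blk_outer)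
qed

lemma Opt_le_OptSDP:
  assumes "DSDP A0 b0 c0 A b c I \<subseteq> convex hull (DD A0 b0 c0 A b c I)"
  shows "Opt A0 b0 c0 A b c I \<le> OptSDP A0 b0 c0 A b c I"
  unfolding Opt_def OptSDP_def
proof (rule Inf_mono, clarify)
  fix x X assume "sdpfeas A b c I x X"
  then have "(x, frob (blk c0 b0 A0) (blk 1 x X) / 2) \<in> DSDP A0 b0 c0 A b c I"
    unfolding DSDP_def by auto
  then have "(x, frob (blk c0 b0 A0) (blk 1 x X) / 2) \<in> convex hull (DD A0 b0 c0 A b c I)"
    using assms by blast
  then obtain y s where "(y, s) \<in> DD A0 b0 c0 A b c I" "s \<le> frob (blk c0 b0 A0) (blk 1 x X) / 2"
    by (metis convex_hull_snd_lower prod.collapse snd_conv)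
  then have "qfeas A b c I y" "qf A0 b0 c0 y \<le> frob (blk c0 b0 A0) (blk 1 x X)"
    unfolding DD_def by auto
  then show "\<exists>z\<in>{ereal (qf A0 b0 c0 x) | x. qfeas A b c I x}.
      z \<le> ereal (frob (blk c0 b0 A0) (blk 1 x X))"
    by (intro bexI[of _ "ereal (qf A0 b0 c0 y)"]) auto
qed

section \<open>Lagrangian duality\<close>

locale qcqp =
  fixes A0 :: "real^'n^'n" and b0 :: "real^'n" and c0 :: real
    and A :: "'m::finite \<Rightarrow> real^'n^'n" and b :: "'m \<Rightarrow> real^'n" and c :: "'m \<Rightarrow> real"
    and I :: "'m set"
  assumes symm_A0: "symm A0" and symm_A: "\<forall>i. symm (A i)"
begin

abbreviation \<Gamma> :: "(real^'m) set" where "\<Gamma> \<equiv> Gam A0 A I"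

definition constraint_values :: "real^'n \<Rightarrow> real^'m" where
  "constraint_values x = (\<chi> k. qf (A k) (b k) (c k) x)"

definition lagrangian :: "real^'m \<Rightarrow> real^'n \<Rightarrow> real" where
  "lagrangian g x = qf A0 b0 c0 x + constraint_values x \<bullet> g"

definition lagrangian_epigraph :: "((real^'n) \<times> real) set" where
  "lagrangian_epigraph = {(x, t). \<forall>g\<in>\<Gamma>. lagrangian g x \<le> 2 * t}"

definition active :: "(real^'n) \<times> real \<Rightarrow> (real^'m) set" where
  "active p = {g\<in>\<Gamma>. lagrangian g (fst p) = 2 * snd p}"

lemma lagrangian_sum: "lagrangian g x = qf A0 b0 c0 x + (\<Sum>k\<in>UNIV. g$k * qf (A k) (b k) (c k) x)"
  unfolding lagrangian_def constraint_values_def inner_vec_def by (simp add: mult.commute)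

lemma lagrangian_eq_qf:
  "lagrangian g x = qf (Agam A0 A g) (bgam b0 b g) (c0 + (\<Sum>k\<in>UNIV. g$k * c k)) x"
  unfolding lagrangian_sum qf_Agam ..

lemma lagrangian_add_multiplier:
  "lagrangian (g + \<mu> *\<^sub>R h) x = lagrangian g x + \<mu> * (constraint_values x \<bullet> h)"
  unfolding lagrangian_def by (simp add: inner_add_right)

lemma symm_Agam_multiplier: "symm (Agam A0 A g)"
  using symm_Agam symm_A0 symm_A by blast

lemma weak_duality: "DSDP A0 b0 c0 A b c I \<subseteq> lagrangian_epigraph"
proof (clarify)
  fix x t assume "(x, t) \<in> DSDP A0 b0 c0 A b c I"
  then obtain X where feas: "sdpfeas A b c I x X"
    and obj: "frob (blk c0 b0 A0) (blk 1 x X) \<le> 2 * t"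
    unfolding DSDP_def by auto
  have psd_schur: "psd (X - outer x)"
    using feas psd_blk_imp_psd_schur unfolding sdpfeas_def by blast
  have "lagrangian g x \<le> 2 * t" if g: "g \<in> \<Gamma>" for g
  proof -
    have "g$k * frob (blk (c k) (b k) (A k)) (blk 1 x X) \<le> 0" for k
    proof (cases "k \<in> I")
      case True
      then have "0 \<le> g$k" "frob (blk (c k) (b k) (A k)) (blk 1 x X) \<le> 0"
        using feas g unfolding sdpfeas_def Gam_def by auto
      then show ?thesis by (rule mult_nonneg_nonpos)
    next
      case False
      then show ?thesis using feas unfolding sdpfeas_def by simp
    qed
    then have "(\<Sum>k\<in>UNIV. g$k * frob (blk (c k) (b k) (A k)) (blk 1 x X)) \<le> 0"
      by (rule sum_nonpos)
    then have "frob (blk c0 b0 A0) (blk 1 x X)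
        + (\<Sum>k\<in>UNIV. g$k * frob (blk (c k) (b k) (A k)) (blk 1 x X)) \<le> 2 * t"
      using obj by linarith
    also have "frob (blk c0 b0 A0) (blk 1 x X)
        + (\<Sum>k\<in>UNIV. g$k * frob (blk (c k) (b k) (A k)) (blk 1 x X))
        = lagrangian g x + frob (Agam A0 A g) (X - outer x)"
      unfolding frob_blk_split lagrangian_sum frob_Agam
      by (simp add: algebra_simps sum.distrib)
    finally show ?thesis
      using frob_psd_nonneg[OF _ psd_schur, of "Agam A0 A g"] g unfolding Gam_def by simp
  qed
  then show "(x, t) \<in> lagrangian_epigraph" unfolding lagrangian_epigraph_def by simp
qed

lemma Agam_add_axis: "Agam A0 A (g + e *\<^sub>R axis i 1) = Agam A0 A g + e *\<^sub>R A i"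
proof -
  have "(g + e *\<^sub>R axis i 1)$k *\<^sub>R A k = g$k *\<^sub>R A k + (if k = i then e *\<^sub>R A k else 0)" for k
    by (simp add: axis_def scaleR_add_left)
  then have "(\<Sum>k\<in>UNIV. (g + e *\<^sub>R axis i 1)$k *\<^sub>R A k)
      = (\<Sum>k\<in>UNIV. g$k *\<^sub>R A k) + (\<Sum>k\<in>UNIV. (if k = i then e *\<^sub>R A k else 0))"
    by (simp add: sum.distrib)
  then show ?thesis unfolding Agam_def by (simp add: add.assoc)
qed

lemma lagrangian_add_axis:
  "lagrangian (g + e *\<^sub>R axis i 1) x = lagrangian g x + e * qf (A i) (b i) (c i) x"
  unfolding lagrangian_add_multiplier by (simp add: inner_axis constraint_values_def)

lemma multiplier_perturbation:
  assumes "g \<in> \<Gamma>" "pd (Agam A0 A g)"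
  obtains \<epsilon> where "0 < \<epsilon>"
    "\<And>e i. \<bar>e\<bar> < \<epsilon> \<Longrightarrow> (i \<in> I \<Longrightarrow> 0 \<le> g$i + e) \<Longrightarrow> g + e *\<^sub>R axis i 1 \<in> \<Gamma>"
proof -
  have "\<forall>i. \<exists>\<epsilon>>0. \<forall>e. \<bar>e\<bar> < \<epsilon> \<longrightarrow> psd (Agam A0 A g + e *\<^sub>R A i)"
    using pd_perturb[OF assms(2)] symm_A by metis
  then obtain \<epsilon> where \<epsilon>: "\<And>i. 0 < \<epsilon> i" "\<And>i e. \<bar>e\<bar> < \<epsilon> i \<Longrightarrow> psd (Agam A0 A g + e *\<^sub>R A i)"
    by metis
  show thesis
  proof (rule that)
    show "0 < Min (range \<epsilon>)" using \<epsilon>(1) by simp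
    fix e i assume e: "\<bar>e\<bar> < Min (range \<epsilon>)" and nonneg: "i \<in> I \<Longrightarrow> 0 \<le> g$i + e"
    have "\<bar>e\<bar> < \<epsilon> i" using e Min_le[of "range \<epsilon>" "\<epsilon> i"] by simp
    then have "psd (Agam A0 A (g + e *\<^sub>R axis i 1))" unfolding Agam_add_axis by (rule \<epsilon>(2))
    moreover have "0 \<le> (g + e *\<^sub>R axis i 1)$k" if "k \<in> I" for k
      using assms(1) nonneg that unfolding Gam_def by (auto simp: axis_def)
    ultimately show "g + e *\<^sub>R axis i 1 \<in> \<Gamma>" unfolding Gam_def by blast
  qed
qed

lemma definite_active_imp_feasible:
  assumes epi: "(x, t) \<in> lagrangian_epigraph" and act: "g \<in> active (x, t)"
    and pd: "pd (Agam A0 A g)"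
  shows "(x, t) \<in> DD A0 b0 c0 A b c I"
proof -
  have g: "g \<in> \<Gamma>" and tight: "lagrangian g x = 2 * t" using act unfolding active_def by auto
  obtain \<epsilon> where \<epsilon>: "0 < \<epsilon>"
    "\<And>e i. \<bar>e\<bar> < \<epsilon> \<Longrightarrow> (i \<in> I \<Longrightarrow> 0 \<le> g$i + e) \<Longrightarrow> g + e *\<^sub>R axis i 1 \<in> \<Gamma>"
    using multiplier_perturbation[OF g pd] by blast
  have perturbed: "e * qf (A i) (b i) (c i) x \<le> 0"
    if "\<bar>e\<bar> < \<epsilon>" "i \<in> I \<Longrightarrow> 0 \<le> g$i + e" for e i
  proof -
    have "lagrangian (g + e *\<^sub>R axis i 1) x \<le> 2 * t"
      using epi \<epsilon>(2)[OF that] unfolding lagrangian_epigraph_def by blast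
    then show ?thesis using tight unfolding lagrangian_add_axis by simp
  qed
  have le: "qf (A i) (b i) (c i) x \<le> 0" for i
  proof -
    have "i \<in> I \<Longrightarrow> 0 \<le> g$i + \<epsilon> / 2" using g \<epsilon>(1) unfolding Gam_def by auto
    then have "(\<epsilon> / 2) * qf (A i) (b i) (c i) x \<le> 0" using \<epsilon>(1) by (intro perturbed) auto
    then show ?thesis using \<epsilon>(1) by (simp add: mult_le_0_iff)
  qed
  have eq: "qf (A i) (b i) (c i) x = 0" if "i \<notin> I \<or> 0 < g$i" for i
  proof -
    define e where "e = - min (\<epsilon> / 2) (if i \<in> I then g$i else \<epsilon>)"
    have "e < 0" "\<bar>e\<bar> < \<epsilon>" "i \<in> I \<Longrightarrow> 0 \<le> g$i + e"
      using \<epsilon>(1) that unfolding e_def by auto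
    then have "e * qf (A i) (b i) (c i) x \<le> 0" by (intro perturbed)
    then show ?thesis using \<open>e < 0\<close> le[of i] by (simp add: mult_le_0_iff)
  qed
  have "g$k * qf (A k) (b k) (c k) x = 0" for k
    using eq[of k] g unfolding Gam_def by (cases "k \<notin> I \<or> 0 < g$k") force+
  then have "(\<Sum>k\<in>UNIV. g$k * qf (A k) (b k) (c k) x) = 0" by (intro sum.neutral) blast
  then have "qf A0 b0 c0 x = 2 * t" using tight unfolding lagrangian_sum by simp
  moreover have "qfeas A b c I x" unfolding qfeas_def using le eq by blast
  ultimately show ?thesis unfolding DD_def by simp
qed

lemma lagrangian_add_scaleR:
  "lagrangian g (x + s *\<^sub>R v) = lagrangian g x
     + s * (x \<bullet> (Agam A0 A g *v v) + v \<bullet> (Agam A0 A g *v x) + 2 * (bgam b0 b g \<bullet> v))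
     + s\<^sup>2 * (v \<bullet> (Agam A0 A g *v v))"
  unfolding lagrangian_eq_qf qf_add_scaleR ..

lemma continuous_lagrangian_line: "continuous_on UNIV (\<lambda>s. lagrangian g (x + s *\<^sub>R v))"
  unfolding lagrangian_add_scaleR by (intro continuous_intros)

lemma continuous_constraint_values_line:
  "continuous_on UNIV (\<lambda>s. constraint_values (x + s *\<^sub>R v) \<bullet> \<tau>)"
proof -
  have "continuous_on UNIV (\<lambda>s. lagrangian \<tau> (x + s *\<^sub>R v) - qf A0 b0 c0 (x + s *\<^sub>R v))"
    unfolding qf_add_scaleR lagrangian_add_scaleR by (intro continuous_intros)
  then show ?thesis unfolding lagrangian_def by simp
qed

lemma lagrangian_along_kernel:
  assumes "g \<in> active (x, t)" "Agam A0 A g *v v = 0" "bgam b0 b g \<bullet> v = \<kappa>"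
  shows "lagrangian g (x + s *\<^sub>R v) = 2 * (t + s * \<kappa>)"
proof -
  have "v \<bullet> (Agam A0 A g *v x) = x \<bullet> (Agam A0 A g *v v)"
    by (rule symm_inner_commute[OF symm_Agam_multiplier])
  then show ?thesis using assms unfolding lagrangian_add_scaleR active_def by (simp add: algebra_simps)
qed

lemma closed_lagrangian_epigraph_line:
  "closed {s. 0 \<le> s \<and> (x + s *\<^sub>R v, t + s * \<kappa>) \<in> lagrangian_epigraph}"
proof -
  have "{s. 0 \<le> s \<and> (x + s *\<^sub>R v, t + s * \<kappa>) \<in> lagrangian_epigraph}
      = {s. 0 \<le> s} \<inter> (\<Inter>g\<in>\<Gamma>. {s. lagrangian g (x + s *\<^sub>R v) \<le> 2 * (t + s * \<kappa>)})"
    unfolding lagrangian_epigraph_def by auto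
  also have "closed \<dots>"
    by (intro closed_Int closed_INT ballI closed_Collect_le continuous_lagrangian_line
        continuous_intros)
  finally show ?thesis .
qed

lemma lagrangian_epigraph_recession:
  assumes epi: "(y, r) \<in> lagrangian_epigraph" and g: "g \<in> \<Gamma>"
    and ray: "\<forall>\<mu>\<ge>0. g + \<mu> *\<^sub>R \<tau> \<in> \<Gamma>"
  shows "constraint_values y \<bullet> \<tau> \<le> 0"
proof (rule ccontr)
  assume "\<not> constraint_values y \<bullet> \<tau> \<le> 0"
  then have pos: "0 < constraint_values y \<bullet> \<tau>" by simp
  have bound: "lagrangian h y \<le> 2 * r" if "h \<in> \<Gamma>" for h
    using epi that unfolding lagrangian_epigraph_def by simp
  define \<mu> where "\<mu> = (2 * r - lagrangian g y + 1) / (constraint_values y \<bullet> \<tau>)"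
  have "0 \<le> \<mu>" unfolding \<mu>_def using pos bound[OF g] by (intro divide_nonneg_pos) auto
  then have "lagrangian (g + \<mu> *\<^sub>R \<tau>) y \<le> 2 * r" using ray by (intro bound) blast
  moreover have "lagrangian (g + \<mu> *\<^sub>R \<tau>) y = 2 * r + 1"
    unfolding lagrangian_add_multiplier \<mu>_def using pos by (simp add: field_simps)
  ultimately show False by simp
qed

end

lemma semidefinite_face_kernel_direction:
  assumes "F \<noteq> {}" and dims: "aff_dim (bgam b0 b ` F) + 1 \<le> int (dim (VF A0 A F))"
  obtains v \<kappa> where "v \<noteq> 0" "\<And>g. g \<in> F \<Longrightarrow> Agam A0 A g *v v = 0 \<and> bgam b0 b g \<bullet> v = \<kappa>"
proof -
  obtain g0 where g0: "g0 \<in> F" using assms(1) by blast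
  define W where "W = (\<lambda>y. y - bgam b0 b g0) ` (bgam b0 b ` F)"
  have "aff_dim (bgam b0 b ` F) = int (dim W)"
    unfolding W_def using g0 by (intro aff_dim_eq_dim_subtract) (simp add: hull_inc)
  moreover have "subspace (VF A0 A F)"
    unfolding subspace_def VF_def by (simp add: matrix_vector_right_distrib matrix_vector_mult_scaleR)
  moreover have "dim W < dim (VF A0 A F)" using dims calculation(1) by linarith
  ultimately obtain v where v: "v \<in> VF A0 A F" "v \<noteq> 0" "\<And>w. w \<in> W \<Longrightarrow> orthogonal w v"
    using subspace_orthogonal_nonzero_exists by metis
  have "bgam b0 b g \<bullet> v = bgam b0 b g0 \<bullet> v" if "g \<in> F" for g
  proof -
    have "bgam b0 b g - bgam b0 b g0 \<in> W" unfolding W_def using that by blast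
    then have "(bgam b0 b g - bgam b0 b g0) \<bullet> v = 0" using v(3) by (simp add: orthogonal_def)
    then show ?thesis by (simp add: inner_diff_left)
  qed
  then show thesis using v(1,2) unfolding VF_def by (intro that[of v]) auto
qed

section \<open>The convex hull of the epigraph\<close>

locale qcqp_regular = qcqp +
  assumes polyhedron_Gamma: "polyhedron (Gam A0 A I)"
    and definite: "\<exists>g. (\<forall>i\<in>I. 0 \<le> g$i) \<and> pd (Agam A0 A g)"
begin

lemma definite_multiplier:
  obtains g where "g \<in> \<Gamma>" "pd (Agam A0 A g)"
proof -
  obtain g where g: "\<forall>i\<in>I. 0 \<le> g$i" "pd (Agam A0 A g)" using definite by blast
  then have "psd (Agam A0 A g)" unfolding pd_def psd_def by (metis inner_zero_left less_eq_real_def)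
  then show thesis using that g unfolding Gam_def by blast
qed

lemma Gamma_nonempty: "\<Gamma> \<noteq> {}"
  using definite_multiplier by blast

text \<open>Minkowski--Weyl reduces the infinitely many constraints defining the epigraph to finitely
  many: a finite set \<open>U\<close> spanning \<open>\<Gamma>\<close> up to recession and the recession directions \<open>T\<close>.\<close>
lemma finite_description:
  obtains U T where "finite U" "finite T" "U \<noteq> {}" "U \<subseteq> \<Gamma>"
    "\<forall>g\<in>\<Gamma>. \<forall>\<tau>\<in>T. \<forall>\<mu>\<ge>0. g + \<mu> *\<^sub>R \<tau> \<in> \<Gamma>"
    "\<forall>y r. (y, r) \<in> lagrangian_epigraph \<longleftrightarrow>
        (\<forall>u\<in>U. lagrangian u y \<le> 2 * r) \<and> (\<forall>\<tau>\<in>T. constraint_values y \<bullet> \<tau> \<le> 0)"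
proof -
  obtain U T where UT: "finite U" "finite T" "U \<noteq> {}" "U \<subseteq> \<Gamma>"
    and rec: "\<forall>g\<in>\<Gamma>. \<forall>\<tau>\<in>T. \<forall>\<mu>\<ge>0. g + \<mu> *\<^sub>R \<tau> \<in> \<Gamma>"
    and rep: "\<forall>g\<in>\<Gamma>. \<exists>u\<in>convex hull U. \<exists>w\<in>convex_cone hull T. g = u + w"
    by (rule polyhedron_convex_hull_plus_cone[OF polyhedron_Gamma Gamma_nonempty])
  have "(y, r) \<in> lagrangian_epigraph \<longleftrightarrow>
      (\<forall>u\<in>U. lagrangian u y \<le> 2 * r) \<and> (\<forall>\<tau>\<in>T. constraint_values y \<bullet> \<tau> \<le> 0)" for y r
  proof
    assume epi: "(y, r) \<in> lagrangian_epigraph"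
    obtain g where "g \<in> \<Gamma>" using Gamma_nonempty by blast
    then have "constraint_values y \<bullet> \<tau> \<le> 0" if "\<tau> \<in> T" for \<tau>
      using rec that by (intro lagrangian_epigraph_recession[OF epi]) blast+
    then show "(\<forall>u\<in>U. lagrangian u y \<le> 2 * r) \<and> (\<forall>\<tau>\<in>T. constraint_values y \<bullet> \<tau> \<le> 0)"
      using epi UT(4) unfolding lagrangian_epigraph_def by blast
  next
    assume bounds: "(\<forall>u\<in>U. lagrangian u y \<le> 2 * r) \<and> (\<forall>\<tau>\<in>T. constraint_values y \<bullet> \<tau> \<le> 0)"
    have "lagrangian g y \<le> 2 * r" if g: "g \<in> \<Gamma>" for g
    proof -
      obtain u w where uw: "u \<in> convex hull U" "w \<in> convex_cone hull T" "g = u + w"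
        using rep g by blast
      have "(qf A0 b0 c0 y - 2 * r) + constraint_values y \<bullet> (u + w) \<le> 0"
      proof (rule affine_nonpos_on_hull_plus_cone[OF _ _ uw(1,2)])
        show "qf A0 b0 c0 y - 2 * r + constraint_values y \<bullet> u' \<le> 0" if "u' \<in> U" for u'
        proof -
          have "lagrangian u' y \<le> 2 * r" using bounds that by blast
          then show ?thesis unfolding lagrangian_def by simp
        qed
        show "constraint_values y \<bullet> \<tau> \<le> 0" if "\<tau> \<in> T" for \<tau>
          using bounds that by blast
      qed
      then show ?thesis unfolding lagrangian_def uw(3) by simp
    qed
    then show "(y, r) \<in> lagrangian_epigraph" unfolding lagrangian_epigraph_def by simp
  qed
  then show thesis using UT rec by (intro that) blast+
qed
lemma active_face_of:
  assumes "p \<in> lagrangian_epigraph"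
  shows "active p face_of \<Gamma>"
proof -
  define l where "l = constraint_values (fst p)"
  define \<beta> where "\<beta> = 2 * snd p - qf A0 b0 c0 (fst p)"
  have "active p = \<Gamma> \<inter> {g. l \<bullet> g = \<beta>}"
    unfolding active_def lagrangian_def l_def \<beta>_def by auto
  moreover have "l \<bullet> g \<le> \<beta>" if "g \<in> \<Gamma>" for g
  proof -
    have "lagrangian g (fst p) \<le> 2 * snd p"
      using assms that unfolding lagrangian_epigraph_def by auto
    then show ?thesis unfolding lagrangian_def l_def \<beta>_def by simp
  qed
  ultimately show ?thesis
    using face_of_Int_supporting_hyperplane_le[OF polyhedron_imp_convex[OF polyhedron_Gamma]]
    by simp
qed

lemma exists_active_below:
  assumes "(x, t) \<in> lagrangian_epigraph"
  obtains \<delta> where "0 \<le> \<delta>" "(x, t - \<delta>) \<in> lagrangian_epigraph" "active (x, t - \<delta>) \<noteq> {}"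
proof -
  obtain U T where U: "finite U" "finite T" "U \<noteq> {}" "U \<subseteq> \<Gamma>"
    and "\<forall>g\<in>\<Gamma>. \<forall>\<tau>\<in>T. \<forall>\<mu>\<ge>0. g + \<mu> *\<^sub>R \<tau> \<in> \<Gamma>"
    and epi: "\<forall>y r. (y, r) \<in> lagrangian_epigraph
      \<longleftrightarrow> (\<forall>u\<in>U. lagrangian u y \<le> 2 * r) \<and> (\<forall>\<tau>\<in>T. constraint_values y \<bullet> \<tau> \<le> 0)"
    by (rule finite_description)
  \<comment> \<open>lower \<open>t\<close> until the largest of the finitely many Lagrangian values becomes tight\<close>
  define m where "m = Max ((\<lambda>u. lagrangian u x) ` U)"
  have "m \<in> (\<lambda>u. lagrangian u x) ` U" unfolding m_def using U(1,3) by (intro Max_in) auto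
  then obtain u where u: "u \<in> U" "lagrangian u x = m" by auto
  have le_m: "lagrangian u' x \<le> m" if "u' \<in> U" for u'
    unfolding m_def using U(1) that by simp
  define \<delta> where "\<delta> = t - m / 2"
  have "lagrangian u x \<le> 2 * t" using assms u(1) unfolding epi[rule_format] by blast
  then have "0 \<le> \<delta>" unfolding \<delta>_def u(2) by simp
  moreover have "(x, t - \<delta>) \<in> lagrangian_epigraph"
    using assms le_m unfolding epi[rule_format] \<delta>_def by simp
  moreover have "u \<in> active (x, t - \<delta>)"
    unfolding active_def \<delta>_def using u U(4) by auto
  ultimately show thesis using that by blast
qed

lemma bounded_along_line:
  assumes "v \<noteq> 0"
  obtains B where "\<And>s. (x + s *\<^sub>R v, t + s * \<kappa>) \<in> lagrangian_epigraph \<Longrightarrow> s \<le> B"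
proof -
  obtain g where g: "g \<in> \<Gamma>" "pd (Agam A0 A g)" by (rule definite_multiplier)
  define \<beta> where "\<beta> = v \<bullet> (Agam A0 A g *v v)"
  define a where "a = x \<bullet> (Agam A0 A g *v v) + v \<bullet> (Agam A0 A g *v x) + 2 * (bgam b0 b g \<bullet> v) - 2 * \<kappa>"
  define C where "C = lagrangian g x - 2 * t"
  have "0 < \<beta>" unfolding \<beta>_def using g(2) assms unfolding pd_def by blast
  show thesis
  proof (rule that)
    fix s assume "(x + s *\<^sub>R v, t + s * \<kappa>) \<in> lagrangian_epigraph"
    then have "lagrangian g (x + s *\<^sub>R v) \<le> 2 * (t + s * \<kappa>)"
      using g(1) unfolding lagrangian_epigraph_def by blast
    then have "C + s * a + s\<^sup>2 * \<beta> \<le> 0"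
      unfolding lagrangian_add_scaleR C_def a_def \<beta>_def by (simp add: algebra_simps)
    then show "s \<le> max 1 ((\<bar>C\<bar> + \<bar>a\<bar>) / \<beta>)" using \<open>0 < \<beta>\<close> by (rule quadratic_nonpos_bounded[rotated])
  qed
qed

text \<open>Constraints that are not tight along the whole line are slack at \<open>s1\<close>, and only finitely
  many of them matter.\<close>
lemma eventually_in_epigraph_along_line:
  assumes tight: "\<And>g s. g \<in> F \<Longrightarrow> lagrangian g (x + s *\<^sub>R v) = 2 * (t + s * \<kappa>)"
    and "F \<noteq> {}" "F \<subseteq> \<Gamma>" and epi: "(x + s1 *\<^sub>R v, t + s1 * \<kappa>) \<in> lagrangian_epigraph"
    and act: "active (x + s1 *\<^sub>R v, t + s1 * \<kappa>) \<subseteq> F"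
  shows "\<forall>\<^sub>F s in at_right s1. (x + s *\<^sub>R v, t + s * \<kappa>) \<in> lagrangian_epigraph"
proof -
  obtain U T where U: "finite U" "finite T" "U \<noteq> {}" "U \<subseteq> \<Gamma>"
    and rec: "\<forall>g\<in>\<Gamma>. \<forall>\<tau>\<in>T. \<forall>\<mu>\<ge>0. g + \<mu> *\<^sub>R \<tau> \<in> \<Gamma>"
    and char: "\<forall>y r. (y, r) \<in> lagrangian_epigraph
      \<longleftrightarrow> (\<forall>u\<in>U. lagrangian u y \<le> 2 * r) \<and> (\<forall>\<tau>\<in>T. constraint_values y \<bullet> \<tau> \<le> 0)"
    by (rule finite_description)
  define X where "X s = x + s *\<^sub>R v" for s
  define Y where "Y s = t + s * \<kappa>" for s
  have epi1: "\<forall>u\<in>U. lagrangian u (X s1) \<le> 2 * Y s1" "\<forall>\<tau>\<in>T. constraint_values (X s1) \<bullet> \<tau> \<le> 0"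
    using epi char unfolding X_def Y_def by blast+
  have ev_U: "\<forall>\<^sub>F s in at_right s1. lagrangian u (X s) - 2 * Y s \<le> 0" if u: "u \<in> U" for u
  proof (rule eventually_at_right_nonpos)
    show "continuous_on UNIV (\<lambda>s. lagrangian u (X s) - 2 * Y s)"
      unfolding X_def Y_def by (intro continuous_intros continuous_lagrangian_line)
    show "lagrangian u (X s1) - 2 * Y s1 \<le> 0" using epi1(1) u by simp
    assume "lagrangian u (X s1) - 2 * Y s1 = 0"
    then have "u \<in> F" using act u U(4) unfolding active_def X_def Y_def by auto
    then show "\<forall>s. lagrangian u (X s) - 2 * Y s \<le> 0" using tight unfolding X_def Y_def by simp
  qed
  obtain g0 where g0: "g0 \<in> F" "g0 \<in> \<Gamma>" using assms(2,3) by blast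
  have ev_T: "\<forall>\<^sub>F s in at_right s1. constraint_values (X s) \<bullet> \<tau> \<le> 0" if \<tau>: "\<tau> \<in> T" for \<tau>
  proof (rule eventually_at_right_nonpos)
    show "continuous_on UNIV (\<lambda>s. constraint_values (X s) \<bullet> \<tau>)"
      unfolding X_def by (rule continuous_constraint_values_line)
    show "constraint_values (X s1) \<bullet> \<tau> \<le> 0" using epi1(2) \<tau> by blast
    assume zero: "constraint_values (X s1) \<bullet> \<tau> = 0"
    \<comment> \<open>then \<open>g0 + \<tau>\<close> is active, hence tight along the whole line like \<open>g0\<close>\<close>
    have "g0 + 1 *\<^sub>R \<tau> \<in> \<Gamma>" using rec g0(2) \<tau> zero_le_one by blast
    moreover have "lagrangian (g0 + 1 *\<^sub>R \<tau>) (X s1) = 2 * Y s1"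
      using zero tight[OF g0(1)] unfolding lagrangian_add_multiplier X_def Y_def by simp
    ultimately have "g0 + 1 *\<^sub>R \<tau> \<in> F" using act unfolding active_def X_def Y_def by auto
    then have "constraint_values (X s) \<bullet> \<tau> = 0" for s
      using tight[of "g0 + 1 *\<^sub>R \<tau>" s] tight[OF g0(1), of s]
      unfolding lagrangian_add_multiplier X_def by simp
    then show "\<forall>s. constraint_values (X s) \<bullet> \<tau> \<le> 0" by simp
  qed
  have "\<forall>\<^sub>F s in at_right s1. (\<forall>u\<in>U. lagrangian u (X s) - 2 * Y s \<le> 0)
      \<and> (\<forall>\<tau>\<in>T. constraint_values (X s) \<bullet> \<tau> \<le> 0)"
    using ev_U ev_T by (intro eventually_conj eventually_ball_finite U(1,2) ballI)
  then show ?thesis unfolding X_def Y_def by (rule eventually_mono) (simp add: char)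
qed

lemma last_point_in_epigraph_on_line:
  assumes "(x, t) \<in> lagrangian_epigraph" "v \<noteq> 0"
  obtains s1 where "0 \<le> s1" "(x + s1 *\<^sub>R v, t + s1 * \<kappa>) \<in> lagrangian_epigraph"
    "\<And>s. s1 < s \<Longrightarrow> (x + s *\<^sub>R v, t + s * \<kappa>) \<notin> lagrangian_epigraph"
proof -
  define J where "J = {s. 0 \<le> s \<and> (x + s *\<^sub>R v, t + s * \<kappa>) \<in> lagrangian_epigraph}"
  obtain B where B: "\<And>s. (x + s *\<^sub>R v, t + s * \<kappa>) \<in> lagrangian_epigraph \<Longrightarrow> s \<le> B"
    using bounded_along_line[OF assms(2)] by blast
  have bdd: "bdd_above J" unfolding J_def by (rule bdd_aboveI[where M=B]) (auto intro: B)
  have "0 \<in> J" unfolding J_def using assms(1) by simp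
  then have "Sup J \<in> J"
    using closed_contains_Sup[OF _ bdd] closed_lagrangian_epigraph_line unfolding J_def by blast
  moreover have "s \<notin> J" if "Sup J < s" for s
    using cSup_upper[OF _ bdd, of s] that by auto
  ultimately show thesis using that[of "Sup J"] unfolding J_def by force
qed

lemma move_along_kernel:
  assumes epi: "(x, t) \<in> lagrangian_epigraph" and ne: "active (x, t) \<noteq> {}" and "v \<noteq> 0"
    and kernel: "\<And>g. g \<in> active (x, t) \<Longrightarrow> Agam A0 A g *v v = 0 \<and> bgam b0 b g \<bullet> v = \<kappa>"
  obtains s where "0 < s" "(x + s *\<^sub>R v, t + s * \<kappa>) \<in> lagrangian_epigraph"
    "active (x, t) \<subset> active (x + s *\<^sub>R v, t + s * \<kappa>)"
proof -
  define F where "F = active (x, t)"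
  have F\<Gamma>: "F \<subseteq> \<Gamma>" unfolding F_def active_def by auto
  have tight: "lagrangian g (x + s *\<^sub>R v) = 2 * (t + s * \<kappa>)" if "g \<in> F" for g s
    using kernel that lagrangian_along_kernel unfolding F_def by blast
  have F_active: "F \<subseteq> active (x + s *\<^sub>R v, t + s * \<kappa>)" for s
    using tight F\<Gamma> unfolding active_def by auto
  obtain s1 where s1: "0 \<le> s1" "(x + s1 *\<^sub>R v, t + s1 * \<kappa>) \<in> lagrangian_epigraph"
    "\<And>s. s1 < s \<Longrightarrow> (x + s *\<^sub>R v, t + s * \<kappa>) \<notin> lagrangian_epigraph"
    using last_point_in_epigraph_on_line[OF epi \<open>v \<noteq> 0\<close>] by blast
  have grows: "active (x + s1 *\<^sub>R v, t + s1 * \<kappa>) \<noteq> F"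
  proof
    assume "active (x + s1 *\<^sub>R v, t + s1 * \<kappa>) = F"
    then have "\<forall>\<^sub>F s in at_right s1. (x + s *\<^sub>R v, t + s * \<kappa>) \<in> lagrangian_epigraph"
      using tight ne F\<Gamma> s1(2) unfolding F_def
      by (intro eventually_in_epigraph_along_line[where F = F]) (auto simp: F_def)
    then obtain b where b: "s1 < b"
      "\<And>s. s1 < s \<Longrightarrow> s < b \<Longrightarrow> (x + s *\<^sub>R v, t + s * \<kappa>) \<in> lagrangian_epigraph"
      unfolding eventually_at_right_field by blast
    have "(x + ((s1 + b) / 2) *\<^sub>R v, t + ((s1 + b) / 2) * \<kappa>) \<in> lagrangian_epigraph"
      using b by (intro b(2)) auto
    then show False using s1(3)[of "(s1 + b) / 2"] b(1) by simp
  qed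
  show thesis
  proof (rule that)
    show "0 < s1" using s1(1) grows unfolding F_def by (cases "s1 = 0") auto
    show "(x + s1 *\<^sub>R v, t + s1 * \<kappa>) \<in> lagrangian_epigraph" by (rule s1(2))
    show "active (x, t) \<subset> active (x + s1 *\<^sub>R v, t + s1 * \<kappa>)"
      using F_active[of s1] grows unfolding F_def by blast
  qed
qed

lemma move_both_ways_along_kernel:
  assumes epi: "(x, t) \<in> lagrangian_epigraph"
    and semidef: "semidef_face A0 A I (active (x, t))"
    and dims: "aff_dim (bgam b0 b ` active (x, t)) + 1 \<le> int (dim (VF A0 A (active (x, t))))"
  obtains d s1 s2 where "0 < s1" "0 < s2"
    "(x, t) + s1 *\<^sub>R d \<in> lagrangian_epigraph" "active (x, t) \<subset> active ((x, t) + s1 *\<^sub>R d)"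
    "(x, t) - s2 *\<^sub>R d \<in> lagrangian_epigraph" "active (x, t) \<subset> active ((x, t) - s2 *\<^sub>R d)"
proof -
  have ne: "active (x, t) \<noteq> {}" using semidef unfolding semidef_face_def by blast
  obtain v \<kappa> where v: "v \<noteq> 0"
    "\<And>g. g \<in> active (x, t) \<Longrightarrow> Agam A0 A g *v v = 0 \<and> bgam b0 b g \<bullet> v = \<kappa>"
    using semidefinite_face_kernel_direction[OF ne dims] by blast
  have "Agam A0 A g *v (- v) = - (Agam A0 A g *v v)" for g
    by (simp add: vec_eq_iff matrix_vector_mult_def sum_negf)
  then have neg: "- v \<noteq> 0"
    "\<And>g. g \<in> active (x, t) \<Longrightarrow> Agam A0 A g *v (- v) = 0 \<and> bgam b0 b g \<bullet> (- v) = - \<kappa>"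
    using v by auto
  obtain s1 where s1: "0 < s1" "(x + s1 *\<^sub>R v, t + s1 * \<kappa>) \<in> lagrangian_epigraph"
      "active (x, t) \<subset> active (x + s1 *\<^sub>R v, t + s1 * \<kappa>)"
    using move_along_kernel[OF epi ne v] by blast
  obtain s2 where s2: "0 < s2" "(x + s2 *\<^sub>R - v, t + s2 * - \<kappa>) \<in> lagrangian_epigraph"
      "active (x, t) \<subset> active (x + s2 *\<^sub>R - v, t + s2 * - \<kappa>)"
    using move_along_kernel[OF epi ne neg] by blast
  show thesis
    by (rule that[of s1 s2 "(v, \<kappa>)"]) (use s1 s2 in \<open>simp_all add: algebra_simps\<close>)
qed

lemma active_strict_mono_aff_dim:
  assumes "p \<in> lagrangian_epigraph" "q \<in> lagrangian_epigraph" "active p \<subset> active q"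
  shows "nat (aff_dim \<Gamma> - aff_dim (active q)) < nat (aff_dim \<Gamma> - aff_dim (active p))"
proof -
  have p: "active p face_of \<Gamma>" and q: "active q face_of \<Gamma>"
    using assms(1,2) active_face_of by auto
  have "active p face_of active q"
    using face_of_subset[OF p] assms(3) face_of_imp_subset[OF q] by blast
  then have "aff_dim (active p) < aff_dim (active q)"
    using face_of_aff_dim_lt[OF face_of_imp_convex[OF q]] assms(3) by blast
  moreover have "aff_dim (active q) \<le> aff_dim \<Gamma>"
    using face_of_imp_subset[OF q] by (rule aff_dim_subset)
  ultimately show ?thesis by simp
qed

lemma lagrangian_epigraph_subset_convex_hull:
  assumes faces: "\<forall>F. semidef_face A0 A I F \<longrightarrow>
                  int (dim (VF A0 A F)) \<ge> aff_dim (bgam b0 b ` F) + 1"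
  shows "lagrangian_epigraph \<subseteq> convex hull (DD A0 b0 c0 A b c I)"
proof
  fix p assume "p \<in> lagrangian_epigraph"
  then show "p \<in> convex hull (DD A0 b0 c0 A b c I)"
  proof (induction "nat (aff_dim \<Gamma> - aff_dim (active p))" arbitrary: p rule: less_induct)
    case less
    obtain x t where p: "p = (x, t)" by (cases p)
    have epi: "(x, t) \<in> lagrangian_epigraph" using less.prems p by simp
    have IH: "q \<in> convex hull (DD A0 b0 c0 A b c I)"
      if "q \<in> lagrangian_epigraph" "active (x, t) \<subset> active q" for q
      using less.hyps[OF _ that(1)] active_strict_mono_aff_dim[OF epi that] p by blast
    consider (empty) "active (x, t) = {}"
      | (definite) g where "g \<in> active (x, t)" "pd (Agam A0 A g)"
      | (semidefinite) "semidef_face A0 A I (active (x, t))"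
      using active_face_of[OF epi] unfolding semidef_face_def by blast
    then show ?case
    proof cases
      case empty
      obtain \<delta> where \<delta>: "0 \<le> \<delta>" "(x, t - \<delta>) \<in> lagrangian_epigraph" "active (x, t - \<delta>) \<noteq> {}"
        using exists_active_below[OF epi] by blast
      \<comment> \<open>\<open>DD\<close> is closed upwards in \<open>t\<close>\<close>
      have "(x, t - \<delta>) + (0, \<delta>) \<in> convex hull (DD A0 b0 c0 A b c I)"
        using \<delta> empty by (intro convex_hull_shift_closed IH) (auto simp: DD_def)
      then show ?thesis using p by simp
    next
      case definite
      then show ?thesis using definite_active_imp_feasible[OF epi] p by (simp add: hull_inc)
    next
      case semidefinite
      moreover have "aff_dim (bgam b0 b ` active (x, t)) + 1 \<le> int (dim (VF A0 A (active (x, t))))"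
        using faces semidefinite by blast
      ultimately obtain d s1 s2 where s: "0 < s1" "0 < s2"
        "(x, t) + s1 *\<^sub>R d \<in> lagrangian_epigraph" "active (x, t) \<subset> active ((x, t) + s1 *\<^sub>R d)"
        "(x, t) - s2 *\<^sub>R d \<in> lagrangian_epigraph" "active (x, t) \<subset> active ((x, t) - s2 *\<^sub>R d)"
        by (rule move_both_ways_along_kernel[OF epi])
      have "(x, t) + s1 *\<^sub>R d \<in> convex hull (DD A0 b0 c0 A b c I)"
        "(x, t) - s2 *\<^sub>R d \<in> convex hull (DD A0 b0 c0 A b c I)"
        using IH s(3-6) by blast+
      then have "(x, t) \<in> convex hull (DD A0 b0 c0 A b c I)"
        by (rule convex_between[OF convex_convex_hull _ _ s(1,2)])
      then show ?thesis using p by simp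
    qed
  qed
qed

end

theorem mainTheorem7:
  fixes A0 :: "real^'n^'n" and b0 :: "real^'n" and c0 :: real
    and A :: "'m::finite \<Rightarrow> real^'n^'n" and b :: "'m \<Rightarrow> real^'n" and c :: "'m \<Rightarrow> real"
    and I :: "'m set"
  assumes symA0: "symm A0" and symA: "\<forall>i. symm (A i)"
    and assmA_feas: "\<exists>x. qfeas A b c I x"
    and assmA_def: "\<exists>g. (\<forall>i\<in>I. 0 \<le> g$i) \<and> pd (Agam A0 A g)"
    and assmC: "polyhedron (Gam A0 A I)"
    and faces: "\<forall>F. semidef_face A0 A I F \<longrightarrow>
                  int (dim (VF A0 A F)) \<ge> aff_dim (bgam b0 b ` F) + 1"
  shows "convex hull (DD A0 b0 c0 A b c I) = DSDP A0 b0 c0 A b c I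
         \<and> Opt A0 b0 c0 A b c I = OptSDP A0 b0 c0 A b c I"
proof -
  interpret qcqp_regular A0 b0 c0 A b c I
    using symA0 symA assmC assmA_def by unfold_locales
  have "DSDP A0 b0 c0 A b c I \<subseteq> convex hull (DD A0 b0 c0 A b c I)"
    using weak_duality lagrangian_epigraph_subset_convex_hull[OF faces] by blast
  moreover have "convex hull (DD A0 b0 c0 A b c I) \<subseteq> DSDP A0 b0 c0 A b c I"
    using DD_subset_DSDP convex_DSDP by (rule hull_minimal)
  moreover note Opt_le_OptSDP[of A0 b0 c0 A b c I] OptSDP_le_Opt[of A0 b0 c0 A b c I]
  ultimately show ?thesis by auto
qed

end
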